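(* Let $d\ge2$, $\nu>0$, $R\ge1$, and let $\Lambda\subseteq\mathbb{S}^{d-1}$ be a finite set of points on the unit sphere which is $R^{-1}$-separated, i.e. $|\mu-\mu'|\ge R^{-1}$ for distinct $\mu,\mu'\in\Lambda$. Let $a:\mathbb{R}^d\times\mathbb{R}^d\to\mathbb{C}$ be such that for every $x$ the map $\xi\mapsto a(x,\xi)$ is smooth and for every $N\in\mathbb{N}_0$ there is $C_N$ with $\sup_{|\alpha|\le N}\sup_{\xi\in\mathbb{R}^d}|\partial_\xi^\alpha a(x,\xi)|\le C_N\langle x\rangle^{\nu/2}$ for all $x\in\mathbb{R}^d$. Then for all $b:\Lambda\to\mathbb{C}$, $$\Big\|\sum_{\mu\in\Lambda}b(\mu)\,a(x,\mu)\,e^{2\pi i\mu\cdot x}\Big\|_{L^2_x(\{|x|<R\})}\lesssim R^{\frac{d+\nu}{2}}\|b\|_{\ell^2(\Lambda)},$$ with an implicit constant depending only on $d,\nu$ and finitely many of the constants $C_N$ (in particular independent of $R$, $\Lambda$ and $b$).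
   Context: Notation: $\langle x\rangle:=2+|x|$. *)

theory Defs
  imports "HOL-Analysis.Analysis"
begin

text \<open>Japanese bracket as in the paper's notation: langle x rangle = 2 + |x|.\<close>
definition jbr :: "'a::real_normed_vector \<Rightarrow> real" where
  "jbr x = 2 + norm x"

definition pderiv_coord :: "'n::finite \<Rightarrow> (real^'n \<Rightarrow> complex) \<Rightarrow> real^'n \<Rightarrow> complex" where
  "pderiv_coord i f = (\<lambda>\<xi>. frechet_derivative f (at \<xi>) (axis i 1))"

text \<open>Iterated partial derivative along a list of coordinate indices; a multi-index alpha with
  |alpha| = k corresponds to such a list of length k.\<close>
fun pderivs :: "'n::finite list \<Rightarrow> (real^'n \<Rightarrow> complex) \<Rightarrow> real^'n \<Rightarrow> complex" where
  "pderivs [] f = f"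
| "pderivs (i # is) f = pderiv_coord i (pderivs is f)"

definition smooth_fun :: "(real^'n::finite \<Rightarrow> complex) \<Rightarrow> bool" where
  "smooth_fun f \<longleftrightarrow> (\<forall>is \<xi>. pderivs is f differentiable (at \<xi>))"

end

theory Submission
  imports Defs
begin

text \<open>The symbol is removed by summation by parts over the grid formed by the coordinates of
  the points of \<open>\<Lambda>\<close>: \<open>a(x,\<mu>)\<close> is the sum, over the grid points \<open>t \<le> \<mu>\<close>, of the mixed grid
  differences of \<open>a(x,\<cdot>)\<close> at \<open>t\<close>. By the mean value theorem such a difference is at most the
  product of the gaps to the preceding grid points times \<open>\<langle>x\<rangle>\<^sup>\<nu>\<^sup>/\<^sup>2\<close> times a bound for the
  mixed derivatives of order at most \<open>d\<close>, and on the unit sphere the gaps add up to at most \<open>3\<close>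
  in each coordinate. Weighted Cauchy-Schwarz thus reduces the claim, at the cost of a factor
  \<open>9\<^sup>d (3R)\<^sup>\<nu>\<close>, to the case \<open>a = 1\<close> with truncated coefficients.

  That case is an inequality of Ingham type. The indicator of the ball is dominated by the cube
  bump \<open>\<phi>(x) = \<Prod>\<^sub>j max(0, 4 - (x\<^sub>j/R)\<^sup>2)\<^sup>2\<close>, so it suffices to bound
  \<open>\<integral> \<phi> |\<Sum> c\<^sub>\<mu> e(\<mu>\<cdot>x)|\<^sup>2 = \<Sum> c\<^sub>\<mu> conj(c\<^sub>\<mu>\<^sub>') \<Phi>(\<mu> - \<mu>')\<close>, where \<open>\<Phi>\<close> is the Fourier transform of
  \<open>\<phi>\<close>. A second difference of step \<open>1/(2\<eta>\<^sub>j)\<close> in direction \<open>j\<close> multiplies \<open>\<Phi>(\<eta>)\<close> by \<open>4\<close>;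
  taking one in every direction with \<open>R|\<eta>\<^sub>j| \<ge> 1/2\<close> gives
  \<open>|\<Phi>(\<eta>)| \<le> C R\<^sup>d \<Prod>\<^sub>j (1 + R|\<eta>\<^sub>j|)\<^sup>-\<^sup>2\<close>. A Schur test finishes the proof, since rounding
  \<open>R(\<mu> - \<mu>')\<close> to the integer lattice is essentially injective on an \<open>R\<^sup>-\<^sup>1\<close>-separated set.

  Only derivatives of order at most \<open>d\<close> of the symbol enter.\<close>

section \<open>Summation by parts on a grid\<close>

definition vec_upd :: "'a^'n \<Rightarrow> 'n \<Rightarrow> 'a \<Rightarrow> 'a^'n" where
  "vec_upd t j s = (\<chi> i. if i = j then s else t$i)"

lemma vec_upd_nth [simp]: "vec_upd t j s $ i = (if i = j then s else t$i)"
  by (simp add: vec_upd_def)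

lemma vec_upd_triv [simp]: "vec_upd t j (t$j) = t"
  by (simp add: vec_eq_iff)

lemma vec_upd_upd_same [simp]: "vec_upd (vec_upd t j s) j s' = vec_upd t j s'"
  by (simp add: vec_eq_iff)

lemma vec_upd_commute: "i \<noteq> j \<Longrightarrow> vec_upd (vec_upd t i s) j s' = vec_upd (vec_upd t j s') i s"
  by (simp add: vec_eq_iff)

lemma vec_upd_eq_add_axis: "vec_upd x j s = vec_upd x j 0 + s *\<^sub>R axis j (1::real)"
  by (simp add: vec_eq_iff axis_def)

definition grid :: "('n \<Rightarrow> real set) \<Rightarrow> (real^'n) set" where
  "grid T = {t. \<forall>i. t$i \<in> T i}"

definition grid_below :: "('n \<Rightarrow> real set) \<Rightarrow> 'n \<Rightarrow> real \<Rightarrow> real set" where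
  "grid_below T j s = {u \<in> T j. u < s}"

text \<open>Backward difference along the grid line in direction \<open>j\<close>; below the first grid point
  the function is taken to vanish, so that summing the differences telescopes to \<open>g\<close> itself.\<close>
definition grid_diff ::
    "('n \<Rightarrow> real set) \<Rightarrow> 'n \<Rightarrow> (real^'n \<Rightarrow> 'b::ab_group_add) \<Rightarrow> real^'n \<Rightarrow> 'b" where
  "grid_diff T j g t =
     (if grid_below T j (t$j) = {} then g t
      else g t - g (vec_upd t j (Max (grid_below T j (t$j)))))"

fun grid_diffs ::
    "('n \<Rightarrow> real set) \<Rightarrow> 'n list \<Rightarrow> (real^'n \<Rightarrow> 'b::ab_group_add) \<Rightarrow> real^'n \<Rightarrow> 'b" where
  "grid_diffs T [] g = g"
| "grid_diffs T (j # L) g = grid_diff T j (grid_diffs T L g)"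

fun grid_sums ::
    "('n \<Rightarrow> real set) \<Rightarrow> 'n list \<Rightarrow> (real^'n \<Rightarrow> 'b::comm_monoid_add) \<Rightarrow> real^'n \<Rightarrow> 'b" where
  "grid_sums T [] F x = F x"
| "grid_sums T (j # L) F x = (\<Sum>s\<in>{u \<in> T j. u \<le> x$j}. grid_sums T L F (vec_upd x j s))"

definition grid_gap :: "('n \<Rightarrow> real set) \<Rightarrow> 'n \<Rightarrow> real \<Rightarrow> real" where
  "grid_gap T j s = (if grid_below T j s = {} then 1 else s - Max (grid_below T j s))"

lemma Max_grid_below:
  assumes "finite (T j)" "grid_below T j s \<noteq> {}"
  shows "Max (grid_below T j s) \<in> T j" "Max (grid_below T j s) < s"
    and "\<And>u. u \<in> T j \<Longrightarrow> u < s \<Longrightarrow> u \<le> Max (grid_below T j s)"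
  using Max_in[of "grid_below T j s"] Max_ge[of "grid_below T j s"] assms
  by (auto simp: grid_below_def)

lemma sum_grid_diff:
  assumes fin: "finite (T j)" and x: "x$j \<in> T j"
  shows "(\<Sum>s\<in>{u \<in> T j. u \<le> x$j}. grid_diff T j g (vec_upd x j s)) = g x"
  using x
proof (induction "card {u \<in> T j. u \<le> x$j}" arbitrary: x rule: less_induct)
  case less
  show ?case
  proof (cases "grid_below T j (x$j) = {}")
    case True
    then have "{u \<in> T j. u \<le> x$j} = {x$j}"
      using less.prems by (force simp: grid_below_def)
    then show ?thesis using True by (simp add: grid_diff_def)
  next
    case False
    define p where "p = Max (grid_below T j (x$j))"
    have p: "p \<in> T j" "p < x$j" "\<And>u. u \<in> T j \<Longrightarrow> u < x$j \<Longrightarrow> u \<le> p"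
      using Max_grid_below[OF fin False] unfolding p_def by auto
    have split: "{u \<in> T j. u \<le> x$j} = insert (x$j) {u \<in> T j. u \<le> p}"
      using less.prems p by force
    have notin: "x$j \<notin> {u \<in> T j. u \<le> p}" and finp: "finite {u \<in> T j. u \<le> p}"
      using p fin by auto
    have "card {u \<in> T j. u \<le> vec_upd x j p $ j} < card {u \<in> T j. u \<le> x$j}"
      using split notin finp by simp
    from less.hyps[OF this] p
    have IH: "(\<Sum>s\<in>{u \<in> T j. u \<le> p}. grid_diff T j g (vec_upd x j s)) = g (vec_upd x j p)"
      by simp
    have "grid_diff T j g x = g x - g (vec_upd x j p)"
      using False by (simp add: grid_diff_def p_def)
    then show ?thesis
      using IH split notin finp by simp
  qed
qed

lemma grid_sums_grid_diff_commute:
  assumes "j \<notin> set L"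
  shows "grid_sums T L (grid_diff T j F) x = grid_diff T j (grid_sums T L F) x"
  using assms
proof (induction L arbitrary: x)
  case Nil
  then show ?case by simp
next
  case (Cons i L)
  then have "i \<noteq> j" "j \<notin> set L" by auto
  with Cons.IH show ?case
    by (simp add: grid_diff_def vec_upd_commute sum_subtractf split: if_splits)
qed

lemma grid_sums_grid_diffs:
  assumes fin: "\<And>i. finite (T i)" and "distinct L" and "\<forall>i\<in>set L. x$i \<in> T i"
  shows "grid_sums T L (grid_diffs T L g) x = g x"
  using assms(2,3)
proof (induction L arbitrary: x g)
  case Nil
  then show ?case by simp
next
  case (Cons j L)
  then have jL: "j \<notin> set L" and IH: "\<And>y. \<forall>i\<in>set L. y$i = x$i \<Longrightarrow>
      grid_sums T L (grid_diffs T L g) y = g y"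
    by auto
  have "grid_diff T j (grid_sums T L (grid_diffs T L g)) (vec_upd x j s) = grid_diff T j g (vec_upd x j s)"
    for s
    using jL by (simp add: grid_diff_def IH)
  then have "grid_sums T (j # L) (grid_diffs T (j # L) g) x
      = (\<Sum>s\<in>{u \<in> T j. u \<le> x$j}. grid_diff T j g (vec_upd x j s))"
    by (simp add: grid_sums_grid_diff_commute[OF jL])
  also have "\<dots> = g x"
    using sum_grid_diff[of T j x g] fin Cons.prems by simp
  finally show ?case .
qed

lemma finite_grid:
  assumes "\<And>i. finite (T i)"
  shows "finite (grid T)"
proof -
  have "grid T = (\<lambda>f. \<chi> i. f i) ` PiE UNIV T"
  proof (intro equalityI subsetI)
    fix t assume "t \<in> grid T"
    then have "vec_nth t \<in> PiE UNIV T" "t = (\<chi> i. vec_nth t i)"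
      by (auto simp: grid_def)
    then show "t \<in> (\<lambda>f. \<chi> i. f i) ` PiE UNIV T" by blast
  qed (auto simp: grid_def)
  then show ?thesis
    using assms by (simp add: finite_PiE)
qed

definition grid_box :: "('n \<Rightarrow> real set) \<Rightarrow> 'n list \<Rightarrow> real^'n \<Rightarrow> (real^'n) set" where
  "grid_box T L x =
     {t. (\<forall>i\<in>set L. t$i \<in> T i \<and> t$i \<le> x$i) \<and> (\<forall>i. i \<notin> set L \<longrightarrow> t$i = x$i)}"

lemma finite_grid_box:
  assumes "\<And>i. finite (T i)"
  shows "finite (grid_box T L x)"
proof (rule finite_subset)
  show "grid_box T L x \<subseteq> grid (\<lambda>i. insert (x$i) (T i))"
    by (auto simp: grid_box_def grid_def)
  show "finite (grid (\<lambda>i. insert (x$i) (T i)))"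
    using assms by (simp add: finite_grid)
qed

lemma grid_box_Cons:
  assumes "j \<notin> set L"
  shows "grid_box T (j # L) x = (\<Union>s\<in>{u \<in> T j. u \<le> x$j}. grid_box T L (vec_upd x j s))"
  using assms by (auto simp: grid_box_def intro!: bexI[of _ "t$j" for t])

lemma grid_sums_eq_sum_grid_box:
  assumes fin: "\<And>i. finite (T i)" and "distinct L"
  shows "grid_sums T L F x = (\<Sum>t\<in>grid_box T L x. F t)"
  using assms(2)
proof (induction L arbitrary: x)
  case Nil
  have "grid_box T [] x = {x}"
    by (auto simp: grid_box_def vec_eq_iff)
  then show ?case by simp
next
  case (Cons j L)
  then have jL: "j \<notin> set L" by simp
  have disj: "grid_box T L (vec_upd x j s) \<inter> grid_box T L (vec_upd x j s') = {}" if "s \<noteq> s'" for s s'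
    using jL that by (auto simp: grid_box_def)
  have "(\<Sum>t\<in>grid_box T (j # L) x. F t)
      = (\<Sum>s\<in>{u \<in> T j. u \<le> x$j}. \<Sum>t\<in>grid_box T L (vec_upd x j s). F t)"
    unfolding grid_box_Cons[OF jL] using fin disj finite_grid_box[OF fin]
    by (subst sum.UNION_disjoint) auto
  then show ?case
    using Cons by simp
qed

lemma pderivs_append: "pderivs (is @ js) g = pderivs is (pderivs js g)"
  by (induction "is") auto

lemma has_vector_derivative_vec_upd:
  fixes g :: "real^'n::finite \<Rightarrow> complex"
  assumes "g differentiable (at (vec_upd x j s))"
  shows "((\<lambda>s. g (vec_upd x j s)) has_vector_derivative pderiv_coord j g (vec_upd x j s)) (at s)"
proof -
  let ?g' = "frechet_derivative g (at (vec_upd x j s))"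
  have g: "(g has_derivative ?g') (at (vec_upd x j 0 + s *\<^sub>R axis j 1))"
    using assms frechet_derivative_works vec_upd_eq_add_axis by metis
  have "((\<lambda>s. vec_upd x j 0 + s *\<^sub>R axis j 1) has_derivative (\<lambda>h. h *\<^sub>R axis j 1)) (at s)"
    by (auto intro!: derivative_eq_intros)
  from diff_chain_at[OF this g]
  have "((\<lambda>s. g (vec_upd x j s)) has_derivative (\<lambda>h. ?g' (h *\<^sub>R axis j 1))) (at s)"
    by (simp add: o_def vec_upd_eq_add_axis[symmetric])
  moreover have "?g' (h *\<^sub>R axis j 1) = h *\<^sub>R pderiv_coord j g (vec_upd x j s)" for h
    using g has_derivative_linear linear_scale by (fastforce simp: pderiv_coord_def)
  ultimately show ?thesis
    by (simp add: has_vector_derivative_def)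
qed

lemma has_vector_derivative_grid_diffs:
  fixes g :: "real^'n::finite \<Rightarrow> complex"
  assumes diff: "\<And>\<xi>. g differentiable (at \<xi>)" and "j \<notin> set L"
  shows "((\<lambda>s. grid_diffs T L g (vec_upd x j s))
           has_vector_derivative grid_diffs T L (pderiv_coord j g) (vec_upd x j s)) (at s)"
  using assms(2)
proof (induction L arbitrary: x)
  case Nil
  then show ?case using has_vector_derivative_vec_upd[OF diff] by simp
next
  case (Cons i L)
  then have ij: "i \<noteq> j" and jL: "j \<notin> set L" by auto
  show ?case
  proof (cases "grid_below T i (x$i) = {}")
    case True
    then show ?thesis using Cons.IH[OF jL, of x] ij by (simp add: grid_diff_def)
  next
    case False
    define p where "p = Max (grid_below T i (x$i))"
    have "grid_diffs T (i # L) h (vec_upd x j s) =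
        grid_diffs T L h (vec_upd x j s) - grid_diffs T L h (vec_upd (vec_upd x i p) j s)"
      for h :: "real^'n \<Rightarrow> complex" and s
      using False ij by (simp add: grid_diff_def p_def vec_upd_commute)
    then show ?thesis
      by (simp only:) (intro has_vector_derivative_diff Cons.IH[OF jL])
  qed
qed

text \<open>Each difference in direction \<open>j\<close> costs one derivative \<open>\<partial>\<^sub>j\<close> and the gap to the
  preceding grid point, by the mean value theorem.\<close>
lemma norm_grid_diff_grid_diffs_le:
  fixes g :: "real^'n::finite \<Rightarrow> complex"
  assumes fin: "finite (T j)" and below: "grid_below T j (t$j) \<noteq> {}"
    and diff: "\<And>\<xi>. g differentiable (at \<xi>)" and jL: "j \<notin> set L"
    and bound: "\<And>s. cmod (grid_diffs T L (pderiv_coord j g) (vec_upd t j s)) \<le> K"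
  shows "cmod (grid_diffs T (j # L) g t) \<le> grid_gap T j (t$j) * K"
proof -
  define p where "p = Max (grid_below T j (t$j))"
  have pt: "p < t$j"
    using Max_grid_below[OF fin below] by (simp add: p_def)
  define \<phi> where "\<phi> = (\<lambda>s. grid_diffs T L g (vec_upd t j s))"
  have der: "(\<phi> has_vector_derivative grid_diffs T L (pderiv_coord j g) (vec_upd t j s)) (at s)" for s
    unfolding \<phi>_def using diff jL by (rule has_vector_derivative_grid_diffs)
  then have "continuous_on {p..t$j} \<phi>"
    by (meson continuous_at_imp_continuous_on has_vector_derivative_continuous)
  then obtain s where
    "cmod (\<phi> (t$j) - \<phi> p) \<le> (t$j - p) * cmod (grid_diffs T L (pderiv_coord j g) (vec_upd t j s))"
    using mvt_general[OF pt, of \<phi> "\<lambda>s h. h *\<^sub>R grid_diffs T L (pderiv_coord j g) (vec_upd t j s)"] der pt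
    by (auto simp: has_vector_derivative_def)
  also have "\<dots> \<le> (t$j - p) * K"
    using bound pt by (intro mult_left_mono) auto
  also have "\<phi> (t$j) - \<phi> p = grid_diffs T (j # L) g t"
    using below by (simp add: grid_diff_def p_def \<phi>_def)
  also have "t$j - p = grid_gap T j (t$j)"
    using below by (simp add: grid_gap_def p_def)
  finally show ?thesis .
qed

lemma norm_grid_diffs_le:
  fixes g :: "real^'n::finite \<Rightarrow> complex"
  assumes "distinct L" "length L \<le> n"
    and smooth: "\<And>is \<xi>. pderivs is g differentiable (at \<xi>)"
    and bound: "\<And>is \<xi>. length is \<le> n \<Longrightarrow> cmod (pderivs is g \<xi>) \<le> B"
    and fin: "\<And>i. finite (T i)"
  shows "cmod (grid_diffs T L g t) \<le> (\<Prod>i\<in>set L. grid_gap T i (t$i)) * B"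
  using assms(1-4)
proof (induction L arbitrary: g n t)
  case Nil
  then show ?case using Nil.prems(4)[of "[]"] by simp
next
  case (Cons j L)
  then have jL: "j \<notin> set L" and dL: "distinct L" and lenL: "length L \<le> n" by auto
  have prod_eq: "(\<Prod>i\<in>set (j # L). grid_gap T i (t$i)) =
      grid_gap T j (t$j) * (\<Prod>i\<in>set L. grid_gap T i (t$i))"
    using jL by simp
  show ?case
  proof (cases "grid_below T j (t$j) = {}")
    case True
    then have "cmod (grid_diffs T (j # L) g t) = cmod (grid_diffs T L g t)"
      by (simp add: grid_diff_def)
    also have "\<dots> \<le> (\<Prod>i\<in>set L. grid_gap T i (t$i)) * B"
      using Cons.IH[OF dL lenL Cons.prems(3) Cons.prems(4)] by blast
    finally show ?thesis using True prod_eq by (simp add: grid_gap_def)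
  next
    case False
    have pderivs_coord: "pderivs is (pderiv_coord j g) = pderivs (is @ [j]) g" for "is"
      by (simp add: pderivs_append)
    have IH: "cmod (grid_diffs T L (pderiv_coord j g) y) \<le> (\<Prod>i\<in>set L. grid_gap T i (y$i)) * B" for y
    proof (rule Cons.IH[OF dL, of "n - 1"])
      show "length L \<le> n - 1" using Cons.prems(2) by simp
      show "pderivs is (pderiv_coord j g) differentiable (at \<xi>)" for "is" \<xi>
        using Cons.prems(3) by (simp add: pderivs_coord)
      show "cmod (pderivs is (pderiv_coord j g) \<xi>) \<le> B" if "length is \<le> n - 1" for "is" \<xi>
        using Cons.prems(2,4) that by (simp add: pderivs_coord)
    qed
    have "cmod (grid_diffs T L (pderiv_coord j g) (vec_upd t j s)) \<le> (\<Prod>i\<in>set L. grid_gap T i (t$i)) * B"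
      for s
    proof -
      have "(\<Prod>i\<in>set L. grid_gap T i (vec_upd t j s $ i)) = (\<Prod>i\<in>set L. grid_gap T i (t$i))"
        using jL by (intro prod.cong) auto
      with IH[of "vec_upd t j s"] show ?thesis
        by simp
    qed
    then have "cmod (grid_diffs T (j # L) g t) \<le> grid_gap T j (t$j) * ((\<Prod>i\<in>set L. grid_gap T i (t$i)) * B)"
      using Cons.prems(3)[of "[]"] by (intro norm_grid_diff_grid_diffs_le fin False jL) auto
    then show ?thesis
      using prod_eq by (simp add: mult.assoc)
  qed
qed

lemma grid_gap_nonneg:
  assumes "finite (T j)"
  shows "0 \<le> grid_gap T j s"
  using Max_grid_below[of T j s] assms by (simp add: grid_gap_def less_imp_le)

lemma sum_grid_gap:
  fixes T :: "'n::finite \<Rightarrow> real set"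
  assumes fin: "finite (T j)" and ne: "T j \<noteq> {}"
  shows "(\<Sum>s\<in>T j. grid_gap T j s) = 1 + Max (T j) - Min (T j)"
proof -
  define x :: "real^'n" where "x = (\<chi> i. Max (T j))"
  have "{u \<in> T j. u \<le> x$j} = T j"
    using fin by (auto simp: x_def)
  then have tel: "(\<Sum>s\<in>T j. grid_diff T j (\<lambda>t. t$j) (vec_upd x j s)) = Max (T j)"
    using sum_grid_diff[of T j x "\<lambda>t. t$j"] fin ne by (simp add: x_def)
  have first: "{s \<in> T j. grid_below T j s = {}} = {Min (T j)}"
  proof (intro equalityI subsetI)
    fix s assume "s \<in> {s \<in> T j. grid_below T j s = {}}"
    then show "s \<in> {Min (T j)}"
      using fin by (auto simp: grid_below_def not_less intro: Min_eqI[symmetric])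
  qed (use fin ne in \<open>auto simp: grid_below_def not_less\<close>)
  have "grid_gap T j s = grid_diff T j (\<lambda>t. t$j) (vec_upd x j s) +
      (if grid_below T j s = {} then 1 - s else 0)" for s
    by (simp add: grid_gap_def grid_diff_def)
  then have "(\<Sum>s\<in>T j. grid_gap T j s) = Max (T j) + (\<Sum>s\<in>{s \<in> T j. grid_below T j s = {}}. 1 - s)"
    using fin by (simp add: sum.distrib tel sum.inter_filter)
  then show ?thesis
    by (simp add: first)
qed

lemma sum_prod_grid_gap_le:
  fixes T :: "'n::finite \<Rightarrow> real set"
  assumes fin: "\<And>i. finite (T i)" and bound: "\<And>i u. u \<in> T i \<Longrightarrow> \<bar>u\<bar> \<le> 1"
  shows "(\<Sum>t\<in>grid T. \<Prod>i\<in>UNIV. grid_gap T i (t$i)) \<le> 3 ^ CARD('n)"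
proof -
  have bij: "bij_betw (\<lambda>f. \<chi> i. f i) (PiE UNIV T) (grid T)"
  proof (rule bij_betwI')
    show "t \<in> grid T \<Longrightarrow> \<exists>f\<in>PiE UNIV T. t = (\<chi> i. f i)" for t
      by (intro bexI[of _ "vec_nth t"]) (auto simp: grid_def)
  qed (auto simp: vec_eq_iff fun_eq_iff grid_def)
  have sum_le: "(\<Sum>s\<in>T i. grid_gap T i s) \<le> 3" for i
  proof (cases "T i = {}")
    case False
    then have "Max (T i) \<in> T i" "Min (T i) \<in> T i"
      using fin by simp_all
    then have "Max (T i) \<le> 1" "-1 \<le> Min (T i)"
      using bound by (force simp: abs_le_iff)+
    with sum_grid_gap[of T i, OF fin False] show ?thesis by linarith
  qed simp
  have "(\<Sum>t\<in>grid T. \<Prod>i\<in>UNIV. grid_gap T i (t$i)) = (\<Sum>f\<in>PiE UNIV T. \<Prod>i\<in>UNIV. grid_gap T i (f i))"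
    using sum.reindex_bij_betw[OF bij, of "\<lambda>t. \<Prod>i\<in>UNIV. grid_gap T i (t$i)"] by simp
  also have "\<dots> = (\<Prod>i\<in>UNIV. \<Sum>s\<in>T i. grid_gap T i s)"
    using prod_sum_PiE[of UNIV T "\<lambda>i s. grid_gap T i s"] fin by simp
  also have "\<dots> \<le> (\<Prod>i\<in>(UNIV::'n set). 3)"
    using sum_le by (intro prod_mono) (auto intro!: sum_nonneg grid_gap_nonneg fin)
  finally show ?thesis by simp
qed

section \<open>A bump function and its second differences\<close>

definition bump :: "real \<Rightarrow> real" where
  "bump u = (max 0 (4 - u\<^sup>2))\<^sup>2"

lemma bump_nonneg: "0 \<le> bump u"
  by (simp add: bump_def)

lemma bump_le: "bump u \<le> 16"
proof -
  have "(max 0 (4 - u\<^sup>2))\<^sup>2 \<le> 4\<^sup>2"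
    by (intro power_mono) auto
  then show ?thesis by (simp add: bump_def)
qed

lemma one_le_bump:
  assumes "\<bar>u\<bar> \<le> 1"
  shows "1 \<le> bump u"
proof -
  have "u\<^sup>2 \<le> 1"
    using assms abs_square_le_1 by blast
  then have "1 \<le> max 0 (4 - u\<^sup>2)"
    by simp
  then show ?thesis
    unfolding bump_def using one_le_power by blast
qed

lemma bump_eq_0:
  assumes "2 < \<bar>u\<bar>"
  shows "bump u = 0"
proof -
  have "2\<^sup>2 < \<bar>u\<bar>\<^sup>2"
    using assms by (intro power_strict_mono) auto
  then show ?thesis
    by (simp add: bump_def)
qed

lemma bump_eq:
  assumes "\<bar>u\<bar> \<le> 2"
  shows "bump u = (4 - u\<^sup>2)\<^sup>2"
proof -
  have "\<bar>u\<bar>\<^sup>2 \<le> 2\<^sup>2"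
    using assms by (intro power_mono) auto
  then show ?thesis
    by (simp add: bump_def)
qed

lemma continuous_on_bump [continuous_intros]:
  "continuous_on S f \<Longrightarrow> continuous_on S (\<lambda>x. bump (f x))"
  unfolding bump_def by (intro continuous_intros)

lemma quartic_minus_bump_bounds:
  assumes "\<bar>v\<bar> \<le> 2 + 2*h" "0 \<le> h" "h \<le> 1"
  shows "0 \<le> (4 - v\<^sup>2)\<^sup>2 - bump v" and "(4 - v\<^sup>2)\<^sup>2 - bump v \<le> 144 * h\<^sup>2"
proof -
  have "0 \<le> (4 - v\<^sup>2)\<^sup>2 - bump v \<and> (4 - v\<^sup>2)\<^sup>2 - bump v \<le> 144 * h\<^sup>2"
  proof (cases "\<bar>v\<bar> \<le> 2")
    case True
    then show ?thesis by (simp add: bump_eq)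
  next
    case False
    then have "(\<bar>v\<bar> - 2) * (\<bar>v\<bar> + 2) \<le> (2*h) * 6"
      using assms by (intro mult_mono) auto
    moreover have "(4 - v\<^sup>2)\<^sup>2 = ((\<bar>v\<bar> - 2) * (\<bar>v\<bar> + 2))\<^sup>2"
      by (simp add: algebra_simps power2_eq_square)
    ultimately have "(4 - v\<^sup>2)\<^sup>2 \<le> ((2*h) * 6)\<^sup>2"
      using False power_mono[of "(\<bar>v\<bar> - 2) * (\<bar>v\<bar> + 2)" "(2*h) * 6" 2] by simp
    then show ?thesis
      using False by (simp add: bump_eq_0 power_mult_distrib)
  qed
  then show "0 \<le> (4 - v\<^sup>2)\<^sup>2 - bump v" "(4 - v\<^sup>2)\<^sup>2 - bump v \<le> 144 * h\<^sup>2"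
    by simp_all
qed

lemma abs_quartic_second_diff_le:
  fixes u h :: real
  assumes "\<bar>u + h\<bar> \<le> 3" "0 \<le> h" "h \<le> 1"
  defines "f \<equiv> \<lambda>v::real. (4 - v\<^sup>2)\<^sup>2"
  shows "\<bar>f u - 2 * f (u + h) + f (u + 2*h)\<bar> \<le> 126 * h\<^sup>2"
proof -
  have "\<bar>u + h\<bar>\<^sup>2 \<le> 3\<^sup>2"
    using assms by (intro power_mono) auto
  then have "(u + h)\<^sup>2 * h\<^sup>2 \<le> 9 * h\<^sup>2"
    by (intro mult_right_mono) auto
  moreover have "f u - 2 * f (u + h) + f (u + 2*h) = 12 * ((u + h)\<^sup>2 * h\<^sup>2) + 2 * h^4 - 16 * h\<^sup>2"
    unfolding f_def by algebra
  moreover have "h^4 \<le> h\<^sup>2" "0 \<le> h^4" "0 \<le> (u + h)\<^sup>2 * h\<^sup>2"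
    using assms by (auto simp: power_decreasing)
  ultimately show ?thesis
    unfolding abs_le_iff by linarith
qed

text \<open>Away from the two kinks at \<open>\<plusminus>2\<close> the bump is the quartic \<open>(4 - u\<^sup>2)\<^sup>2\<close>, whose second
  difference is \<open>O(h\<^sup>2)\<close>; near a kink the quartic and the bump differ by at most
  \<open>O(h\<^sup>2)\<close> because the quartic vanishes to second order there.\<close>
lemma abs_bump_second_diff_le_nonneg:
  assumes h: "0 \<le> h" "h \<le> 1"
  shows "\<bar>bump u - 2 * bump (u + h) + bump (u + 2*h)\<bar> \<le> 1000 * h\<^sup>2"
proof (cases "2 < \<bar>u\<bar> \<and> 2 < \<bar>u + h\<bar> \<and> 2 < \<bar>u + 2*h\<bar>")
  case True
  then show ?thesis by (simp add: bump_eq_0)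
next
  case False
  then have near: "\<bar>u\<bar> \<le> 2 + 2*h" "\<bar>u + h\<bar> \<le> 2 + 2*h" "\<bar>u + 2*h\<bar> \<le> 2 + 2*h"
    using h by auto
  have "\<bar>u + h\<bar> \<le> 3"
    using False h by auto
  with h have "\<bar>(4 - u\<^sup>2)\<^sup>2 - 2 * (4 - (u + h)\<^sup>2)\<^sup>2 + (4 - (u + 2*h)\<^sup>2)\<^sup>2\<bar> \<le> 126 * h\<^sup>2"
    using abs_quartic_second_diff_le by blast
  then show ?thesis
    using quartic_minus_bump_bounds[OF near(1) h] quartic_minus_bump_bounds[OF near(2) h]
      quartic_minus_bump_bounds[OF near(3) h]
    by (simp add: abs_le_iff)
qed

lemma abs_bump_second_diff_le:
  assumes "\<bar>h\<bar> \<le> 1"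
  shows "\<bar>bump u - 2 * bump (u + h) + bump (u + 2*h)\<bar> \<le> 1000 * h\<^sup>2"
proof (cases "0 \<le> h")
  case True
  then show ?thesis using abs_bump_second_diff_le_nonneg assms by simp
next
  case False
  then have "\<bar>bump (u + 2*h) - 2 * bump (u + 2*h + (-h)) + bump (u + 2*h + 2*(-h))\<bar> \<le> 1000 * (-h)\<^sup>2"
    using assms by (intro abs_bump_second_diff_le_nonneg) auto
  then show ?thesis by (simp add: algebra_simps)
qed

definition e2pi :: "real \<Rightarrow> complex" where
  "e2pi t = exp (2 * of_real pi * \<i> * of_real t)"

lemma e2pi_add: "e2pi (s + t) = e2pi s * e2pi t"
  by (simp add: e2pi_def distrib_left exp_add[symmetric])

lemma norm_e2pi [simp]: "cmod (e2pi t) = 1"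
  by (simp add: e2pi_def norm_exp_eq_Re)

lemma cnj_e2pi: "cnj (e2pi t) = e2pi (- t)"
  by (simp add: e2pi_def exp_cnj)

lemma e2pi_minus_mult: "e2pi (- t) * e2pi t = 1" "e2pi t * e2pi (- t) = 1"
  using e2pi_add[of "- t" t] by (simp_all add: e2pi_def mult.commute)

lemma e2pi_minus_half: "e2pi (- (1/2)) = -1"
proof -
  have "2 * of_real pi * \<i> * of_real (- (1/2)) = - (of_real pi * \<i>)"
    by simp
  then show ?thesis
    by (simp add: e2pi_def exp_minus)
qed

lemma e2pi_minus_one: "e2pi (- 1) = 1"
  by (simp add: e2pi_def exp_minus)

lemma continuous_on_e2pi [continuous_intros]:
  "continuous_on S f \<Longrightarrow> continuous_on S (\<lambda>x. e2pi (f x))"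
  unfolding e2pi_def by (intro continuous_intros)

lemma integrable_continuous_vanishing_outside_compact:
  fixes G :: "'a::euclidean_space \<Rightarrow> 'b::{banach, second_countable_topology}"
  assumes "continuous_on UNIV G" "compact S" "\<And>x. x \<notin> S \<Longrightarrow> G x = 0"
  shows "integrable lborel G"
proof -
  have "G = (\<lambda>x. indicator S x *\<^sub>R G x)"
    using assms(3) by (auto simp: fun_eq_iff indicator_def)
  moreover have "integrable lborel (\<lambda>x. indicator S x *\<^sub>R G x)"
    using assms(1,2) by (intro borel_integrable_compact) (auto intro: continuous_on_subset)
  ultimately show ?thesis by simp
qed

lemma
  fixes G :: "'a::euclidean_space \<Rightarrow> 'b::{banach, second_countable_topology}"
  assumes "continuous_on UNIV G"
  shows integral_lborel_translate: "(\<integral>x. G (x + w) \<partial>lborel) = integral\<^sup>L lborel G"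
    and integrable_lborel_translate: "integrable lborel G \<Longrightarrow> integrable lborel (\<lambda>x. G (x + w))"
proof -
  have G: "G \<in> borel_measurable borel"
    using assms by (rule borel_measurable_continuous_onI)
  have shift: "(+) w \<in> measurable lborel borel"
    by (simp add: measurable_lborel2)
  show "(\<integral>x. G (x + w) \<partial>lborel) = integral\<^sup>L lborel G"
    using integral_distr[OF shift G] by (simp add: lborel_distr_plus add.commute)
  show "integrable lborel G \<Longrightarrow> integrable lborel (\<lambda>x. G (x + w))"
    using integrable_distr_eq[OF shift G] by (simp add: lborel_distr_plus add.commute)
qed

definition fourier :: "(real^'n::finite \<Rightarrow> real) \<Rightarrow> real^'n \<Rightarrow> complex" where
  "fourier f \<eta> = (\<integral>x. of_real (f x) * e2pi (\<eta> \<bullet> x) \<partial>lborel)"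

lemma fourier_translate:
  assumes "continuous_on UNIV f"
  shows "fourier (\<lambda>x. f (x + w)) \<eta> = e2pi (- (\<eta> \<bullet> w)) * fourier f \<eta>"
proof -
  have "fourier f \<eta> = (\<integral>x. of_real (f (x + w)) * e2pi (\<eta> \<bullet> x) * e2pi (\<eta> \<bullet> w) \<partial>lborel)"
    unfolding fourier_def using assms
    by (subst integral_lborel_translate[symmetric])
       (auto intro!: continuous_intros simp: inner_add_right e2pi_add mult.assoc)
  also have "\<dots> = fourier (\<lambda>x. f (x + w)) \<eta> * e2pi (\<eta> \<bullet> w)"
    by (simp add: fourier_def)
  finally show ?thesis
    by (metis e2pi_minus_mult(1) mult.assoc mult.commute mult_1)
qed

text \<open>The Fourier transform of a second difference with step \<open>v\<close> is multiplied by
  \<open>1 - 2 e(-\<eta>\<cdot>v) + e(-2\<eta>\<cdot>v)\<close>, which equals \<open>4\<close> when \<open>\<eta>\<cdot>v = 1/2\<close>.\<close>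
lemma fourier_second_difference:
  assumes cont: "continuous_on UNIV f" and "compact S" and supp: "\<And>x. x \<notin> S \<Longrightarrow> f x = 0"
    and half: "\<eta> \<bullet> v = 1/2"
  shows "fourier (\<lambda>x. f x - 2 * f (x + v) + f (x + 2 *\<^sub>R v)) \<eta> = 4 * fourier f \<eta>"
proof -
  let ?F = "\<lambda>x. of_real (f x) * e2pi (\<eta> \<bullet> x)"
  have int: "integrable lborel ?F"
    using assms by (intro integrable_continuous_vanishing_outside_compact[of _ S])
      (auto intro!: continuous_intros)
  have int_shift: "integrable lborel (\<lambda>x. of_real (f (x + w)) * e2pi (\<eta> \<bullet> x))" for w
  proof -
    have "integrable lborel (\<lambda>x. ?F (x + w) * e2pi (- (\<eta> \<bullet> w)))"
      using cont by (intro integrable_mult_left integrable_lborel_translate int)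
        (auto intro!: continuous_intros)
    then show ?thesis
      by (simp add: inner_add_right e2pi_add mult.assoc e2pi_minus_mult)
  qed
  have "fourier (\<lambda>x. f x - 2 * f (x + v) + f (x + 2 *\<^sub>R v)) \<eta>
      = fourier f \<eta> - 2 * fourier (\<lambda>x. f (x + v)) \<eta> + fourier (\<lambda>x. f (x + 2 *\<^sub>R v)) \<eta>"
    unfolding fourier_def using int int_shift[of v] int_shift[of "2 *\<^sub>R v"]
    by (simp add: algebra_simps)
  also have "\<dots> = (1 - 2 * e2pi (- (\<eta> \<bullet> v)) + e2pi (- (\<eta> \<bullet> (2 *\<^sub>R v)))) * fourier f \<eta>"
    by (simp only: fourier_translate[OF cont]) (simp add: algebra_simps)
  also have "\<dots> = 4 * fourier f \<eta>"
    unfolding inner_scaleR_right half by (simp add: e2pi_minus_half e2pi_minus_one)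
  finally show ?thesis .
qed

section \<open>Fourier decay of the cube bump\<close>

definition half_period :: "real^'n \<Rightarrow> 'n \<Rightarrow> real" where
  "half_period \<eta> j = 1 / (2 * \<eta>$j)"

definition high_freqs :: "real \<Rightarrow> real^'n \<Rightarrow> 'n set" where
  "high_freqs R \<eta> = {j. 1 \<le> 2 * R * \<bar>\<eta>$j\<bar>}"

lemma high_freqs_half_period:
  assumes "R > 0" and "j \<in> high_freqs R \<eta>"
  shows "\<bar>half_period \<eta> j\<bar> \<le> R" and "\<eta>$j \<noteq> 0"
proof -
  have le: "1 \<le> 2 * R * \<bar>\<eta>$j\<bar>"
    using assms(2) by (simp add: high_freqs_def)
  then show "\<eta>$j \<noteq> 0" by auto
  then show "\<bar>half_period \<eta> j\<bar> \<le> R"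
    using le by (simp add: half_period_def abs_mult divide_le_eq mult_ac)
qed

definition bump_diff :: "real \<Rightarrow> real \<Rightarrow> real \<Rightarrow> real" where
  "bump_diff R h u = bump (u/R) - 2 * bump ((u + h)/R) + bump ((u + 2*h)/R)"

definition diff_bump :: "real \<Rightarrow> real^'n::finite \<Rightarrow> 'n set \<Rightarrow> real^'n \<Rightarrow> real" where
  "diff_bump R \<eta> J x =
     (\<Prod>j\<in>UNIV. if j \<in> J then bump_diff R (half_period \<eta> j) (x$j) else bump (x$j / R))"

definition cube_bump :: "real \<Rightarrow> real^'n::finite \<Rightarrow> real" where
  "cube_bump R x = (\<Prod>j\<in>UNIV. bump (x$j / R))"

lemma diff_bump_empty: "diff_bump R \<eta> {} = cube_bump R"
  by (simp add: fun_eq_iff diff_bump_def cube_bump_def)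

lemma continuous_on_diff_bump: "continuous_on UNIV (diff_bump R \<eta> J)"
  unfolding diff_bump_def
proof (intro continuous_on_prod)
  fix j
  show "continuous_on UNIV (\<lambda>x. if j \<in> J then bump_diff R (half_period \<eta> j) (x$j) else bump (x$j / R))"
    by (cases "j \<in> J") (auto simp: bump_diff_def divide_inverse intro!: continuous_intros)
qed

lemma abs_bump_diff_le:
  assumes "R > 0" "\<bar>h\<bar> \<le> R"
  shows "\<bar>bump_diff R h u\<bar> \<le> 1000 * (h / R)\<^sup>2"
proof -
  have "\<bar>h / R\<bar> \<le> 1"
    using assms by simp
  from abs_bump_second_diff_le[OF this, of "u/R"] assms show ?thesis
    by (simp add: bump_diff_def add_divide_distrib)
qed

lemma diff_bump_eq_0:
  assumes R: "R > 0" and J: "J \<subseteq> high_freqs R \<eta>"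
    and x: "x \<notin> cbox (\<chi> i. - (4 * R)) (\<chi> i. 4 * R)"
  shows "diff_bump R \<eta> J x = 0"
proof -
  from x obtain j where "\<not> (- (4 * R) \<le> x$j \<and> x$j \<le> 4 * R)"
    by (auto simp: mem_box_cart)
  then have j: "4 * R < \<bar>x$j\<bar>"
    by auto
  have "bump (w / R) = 0" if "2 * R < \<bar>w\<bar>" for w
    using that R by (intro bump_eq_0) (simp add: abs_divide less_divide_eq)
  moreover have "j \<in> J \<Longrightarrow> \<bar>half_period \<eta> j\<bar> \<le> R"
    using high_freqs_half_period(1)[OF R] J by auto
  ultimately have "(if j \<in> J then bump_diff R (half_period \<eta> j) (x$j) else bump (x$j / R)) = 0"
    using j R unfolding bump_diff_def by (smt (verit, best) abs_le_iff)
  then show ?thesis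
    unfolding diff_bump_def by (intro prod_zero bexI[of _ j]) simp_all
qed

lemma integrable_diff_bump_mult:
  fixes h :: "real^'n::finite \<Rightarrow> 'b::{real_normed_algebra_1, banach, second_countable_topology}"
  assumes R: "R > 0" and J: "J \<subseteq> high_freqs R \<eta>" and h: "continuous_on UNIV h"
  shows "integrable lborel (\<lambda>x. of_real (diff_bump R \<eta> J x) * h x)"
  using diff_bump_eq_0[OF R J] continuous_on_diff_bump[of R \<eta> J] h
  by (intro integrable_continuous_vanishing_outside_compact[of _ "cbox (\<chi> i. - (4 * R)) (\<chi> i. 4 * R)"])
    (auto intro!: continuous_intros)

lemma diff_bump_insert:
  fixes \<eta> :: "real^'n::finite"
  assumes "j \<notin> J"
  defines "v \<equiv> half_period \<eta> j *\<^sub>R axis j 1"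
  shows "diff_bump R \<eta> (insert j J) x =
    diff_bump R \<eta> J x - 2 * diff_bump R \<eta> J (x + v) + diff_bump R \<eta> J (x + 2 *\<^sub>R v)"
proof -
  define F where "F J i y = (if i \<in> J then bump_diff R (half_period \<eta> i) y else bump (y / R))" for J i y
  define P where "P = (\<Prod>i\<in>UNIV - {j}. F J i (x$i))"
  have split: "diff_bump R \<eta> K (x + c *\<^sub>R v) = F K j (x$j + c * half_period \<eta> j) * P"
    if "\<forall>i. i \<noteq> j \<longrightarrow> (i \<in> K \<longleftrightarrow> i \<in> J)" for K c
    unfolding diff_bump_def F_def[symmetric] P_def
    using that by (subst prod.remove[of _ j]) (auto simp: v_def axis_def F_def intro!: prod.cong)
  have ins: "diff_bump R \<eta> (insert j J) x = bump_diff R (half_period \<eta> j) (x$j) * P"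
    using split[of "insert j J" 0] by (simp add: F_def)
  have shifted: "diff_bump R \<eta> J (x + c *\<^sub>R v) = bump ((x$j + c * half_period \<eta> j) / R) * P" for c
    using split[of J c] assms(1) by (simp add: F_def)
  show ?thesis
    using shifted[of 0] shifted[of 1] shifted[of 2] unfolding ins
    by (simp add: bump_diff_def algebra_simps)
qed

lemma fourier_diff_bump_insert:
  fixes \<eta> :: "real^'n::finite"
  assumes R: "R > 0" and J: "J \<subseteq> high_freqs R \<eta>" and j: "j \<in> high_freqs R \<eta>" "j \<notin> J"
  shows "fourier (diff_bump R \<eta> (insert j J)) \<eta> = 4 * fourier (diff_bump R \<eta> J) \<eta>"
proof -
  define v where "v = half_period \<eta> j *\<^sub>R axis j (1::real)"
  have half: "\<eta> \<bullet> v = 1/2"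
    using high_freqs_half_period(2)[OF R j(1)] by (simp add: v_def inner_axis half_period_def)
  have "diff_bump R \<eta> (insert j J) =
      (\<lambda>x. diff_bump R \<eta> J x - 2 * diff_bump R \<eta> J (x + v) + diff_bump R \<eta> J (x + 2 *\<^sub>R v))"
    by (simp add: fun_eq_iff v_def diff_bump_insert[OF j(2)])
  then show ?thesis
    using fourier_second_difference[OF continuous_on_diff_bump compact_cbox diff_bump_eq_0[OF R J] half]
    by simp
qed

text \<open>Differencing once in every direction where \<open>\<eta>\<close> is large trades the Fourier transform
  of the cube bump for that of a function of size \<open>O((R\<eta>\<^sub>j)\<^sup>-\<^sup>2)\<close> in those directions.\<close>
lemma fourier_cube_bump_eq:
  fixes \<eta> :: "real^'n::finite"
  assumes R: "R > 0" and J: "J \<subseteq> high_freqs R \<eta>"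
  shows "fourier (cube_bump R) \<eta> = (1/4) ^ card J * fourier (diff_bump R \<eta> J) \<eta>"
proof -
  have "finite J" by simp
  then show ?thesis
    using J
  proof (induction J rule: finite_induct)
    case empty
    then show ?case by (simp add: diff_bump_empty)
  next
    case (insert j J)
    then show ?case
      by (simp add: fourier_diff_bump_insert[OF R])
  qed
qed

lemma abs_diff_bump_factor_le:
  assumes R: "R > 0"
  shows "\<bar>if j \<in> high_freqs R \<eta> then bump_diff R (half_period \<eta> j) u else bump (u / R)\<bar>
           \<le> 2500 / (1 + R * \<bar>\<eta>$j\<bar>)\<^sup>2"
proof -
  define s where "s = R * \<bar>\<eta>$j\<bar>"
  have s0: "0 \<le> s"
    using R by (simp add: s_def)
  show ?thesis
  proof (cases "j \<in> high_freqs R \<eta>")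
    case True
    then have s1: "1/2 \<le> s" and nz: "\<eta>$j \<noteq> 0"
      using high_freqs_half_period(2)[OF R] by (auto simp: high_freqs_def s_def)
    have "\<bar>bump_diff R (half_period \<eta> j) u\<bar> \<le> 1000 * (half_period \<eta> j / R)\<^sup>2"
      using abs_bump_diff_le[OF R high_freqs_half_period(1)[OF R True]] .
    also have "\<dots> = 250 / s\<^sup>2"
      using R nz by (simp add: half_period_def s_def power2_eq_square field_simps)
    also have "\<dots> \<le> 2500 / (1 + s)\<^sup>2"
    proof -
      have "(1 + s)\<^sup>2 \<le> 9 * s\<^sup>2"
        using power_mono[of "1 + s" "3 * s" 2] s1 by (simp add: power_mult_distrib)
      then have "250 * (1 + s)\<^sup>2 \<le> 2500 * s\<^sup>2"
        using zero_le_power2[of s] by linarith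
      moreover have "0 < s\<^sup>2" "0 < (1 + s)\<^sup>2"
        using s0 s1 by auto
      ultimately show ?thesis
        by (simp add: divide_simps)
    qed
    finally show ?thesis
      using True by (simp add: s_def)
  next
    case False
    then have "s < 1/2"
      using R by (simp add: high_freqs_def s_def)
    then have "(1 + s)\<^sup>2 \<le> (3/2)\<^sup>2"
      using s0 by (intro power_mono) auto
    then have "16 \<le> 2500 / (1 + s)\<^sup>2"
      using s0 by (simp add: le_divide_eq power2_eq_square)
    then show ?thesis
      using False bump_nonneg bump_le order_trans by (simp add: s_def) blast
  qed
qed

lemma abs_diff_bump_high_freqs_le:
  assumes "R > 0"
  shows "\<bar>diff_bump R \<eta> (high_freqs R \<eta>) x\<bar> \<le> (\<Prod>j\<in>UNIV. 2500 / (1 + R * \<bar>\<eta>$j\<bar>)\<^sup>2)"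
  unfolding diff_bump_def abs_prod by (intro prod_mono conjI abs_ge_zero abs_diff_bump_factor_le assms)

lemma norm_fourier_cube_bump_le:
  fixes \<eta> :: "real^'n::finite"
  assumes R: "R > 0"
  shows "cmod (fourier (cube_bump R) \<eta>)
           \<le> (20000 * R) ^ CARD('n) * (\<Prod>j\<in>UNIV. 1 / (1 + R * \<bar>\<eta>$j\<bar>)\<^sup>2)"
proof -
  define J where "J = high_freqs R \<eta>"
  define C :: "(real^'n) set" where "C = cbox (\<chi> i. - (4 * R)) (\<chi> i. 4 * R)"
  define M where "M = (\<Prod>j\<in>UNIV. 2500 / (1 + R * \<bar>\<eta>$j\<bar>)\<^sup>2)"
  have pointwise: "cmod (of_real (diff_bump R \<eta> J x) * e2pi (\<eta> \<bullet> x)) \<le> indicator C x * M" for x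
    using abs_diff_bump_high_freqs_le[OF R, of \<eta> x] diff_bump_eq_0[OF R, of J \<eta> x]
    by (cases "x \<in> C") (simp_all add: norm_mult J_def C_def M_def)
  have "emeasure lborel C < \<infinity>"
    unfolding C_def by (rule emeasure_lborel_cbox_finite)
  then have int: "integrable lborel (\<lambda>x. indicator C x * M)"
    by (intro integrable_mult_left integrable_real_indicator) (simp_all add: C_def)
  have "cmod (fourier (cube_bump R) \<eta>) = (1/4) ^ card J * cmod (fourier (diff_bump R \<eta> J) \<eta>)"
    using fourier_cube_bump_eq[OF R, of J \<eta>] by (simp add: J_def norm_mult norm_power)
  also have "\<dots> \<le> cmod (fourier (diff_bump R \<eta> J) \<eta>)"
    by (rule mult_left_le_one_le) (auto simp: power_le_one)
  also have "\<dots> \<le> (\<integral>x. indicator C x * M \<partial>lborel)"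
  proof -
    have "integrable lborel (\<lambda>x. of_real (diff_bump R \<eta> J x) * e2pi (\<eta> \<bullet> x))"
      using R by (intro integrable_diff_bump_mult continuous_intros) (simp_all add: J_def)
    then show ?thesis
      unfolding fourier_def using pointwise int
      by (intro Bochner_Integration.integral_norm_bound_integral) auto
  qed
  also have "\<dots> = measure lborel C * M"
    by simp
  also have "measure lborel C = (8 * R) ^ CARD('n)"
  proof -
    have "0 \<in> C"
      using R by (simp add: C_def mem_box_cart)
    then show ?thesis
      using content_cbox_cart[of "\<chi> i. - (4 * R)" "\<chi> i. 4 * R"] by (auto simp: C_def)
  qed
  also have "M = 2500 ^ CARD('n) * (\<Prod>j\<in>UNIV. 1 / (1 + R * \<bar>\<eta>$j\<bar>)\<^sup>2)"
    unfolding M_def prod_dividef by simp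
  also have "(8 * R) ^ CARD('n) * (2500 ^ CARD('n) * (\<Prod>j\<in>UNIV. 1 / (1 + R * \<bar>\<eta>$j\<bar>)\<^sup>2))
      = (20000 * R) ^ CARD('n) * (\<Prod>j\<in>UNIV. 1 / (1 + R * \<bar>\<eta>$j\<bar>)\<^sup>2)"
    unfolding mult.assoc[symmetric] power_mult_distrib[symmetric] by simp
  finally show ?thesis .
qed

section \<open>Separated frequencies\<close>

lemma sum_inverse_square_int_interval_le:
  "(\<Sum>z\<in>{- int n..int n}. 1 / (1 + \<bar>real_of_int z\<bar>)\<^sup>2) \<le> 3 - 2 / (real n + 1)"
proof (induction n)
  case 0
  then show ?case by simp
next
  case (Suc n)
  have "{- int (Suc n)..int (Suc n)} = insert (- int (Suc n)) (insert (int (Suc n)) {- int n..int n})"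
    by auto
  then have "(\<Sum>z\<in>{- int (Suc n)..int (Suc n)}. 1 / (1 + \<bar>real_of_int z\<bar>)\<^sup>2)
      = 2 / (real n + 2)\<^sup>2 + (\<Sum>z\<in>{- int n..int n}. 1 / (1 + \<bar>real_of_int z\<bar>)\<^sup>2)"
    by (simp add: add_ac)
  also have "\<dots> \<le> 2 / (real n + 2)\<^sup>2 + (3 - 2 / (real n + 1))"
    using Suc.IH by simp
  also have "\<dots> \<le> 3 - 2 / (real (Suc n) + 1)"
  proof -
    have "1 / (real n + 2)\<^sup>2 \<le> 1 / ((real n + 1) * (real n + 2))"
      by (intro divide_left_mono) (auto simp: power2_eq_square)
    also have "\<dots> = 1 / (real n + 1) - 1 / (real n + 2)"
      by (simp add: field_simps)
    finally show ?thesis by (simp add: add_ac)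
  qed
  finally show ?case .
qed

lemma sum_inverse_square_int_le:
  assumes "finite (Z :: int set)"
  shows "(\<Sum>z\<in>Z. 1 / (1 + \<bar>real_of_int z\<bar>)\<^sup>2) \<le> 3"
proof -
  obtain n :: nat where n: "Z \<subseteq> {- int n..int n}"
  proof -
    define m where "m = Max (insert 0 (abs ` Z))"
    have "\<forall>z\<in>Z. \<bar>z\<bar> \<le> m" "0 \<le> m"
      using assms by (auto simp: m_def intro: Max_ge)
    then show ?thesis
      using that[of "nat m"] by force
  qed
  have "(\<Sum>z\<in>Z. 1 / (1 + \<bar>real_of_int z\<bar>)\<^sup>2) \<le> (\<Sum>z\<in>{- int n..int n}. 1 / (1 + \<bar>real_of_int z\<bar>)\<^sup>2)"
    using n by (intro sum_mono2) auto
  also have "\<dots> \<le> 3 - 2 / (real n + 1)"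
    by (rule sum_inverse_square_int_interval_le)
  also have "\<dots> \<le> 3"
    by simp
  finally show ?thesis .
qed

lemma inverse_square_le_floor:
  fixes s R D :: real
  assumes R: "R > 0" and D: "D \<ge> 2"
  shows "1 / (1 + R * \<bar>s\<bar>)\<^sup>2 \<le> D\<^sup>2 / (1 + \<bar>real_of_int \<lfloor>D * R * s\<rfloor>\<bar>)\<^sup>2"
proof -
  define k where "k = \<bar>real_of_int \<lfloor>D * R * s\<rfloor>\<bar>"
  have "k - 1 \<le> \<bar>D * R * s\<bar>"
    unfolding k_def by linarith
  then have "1 + k \<le> D * (1 + R * \<bar>s\<bar>)"
    using R D by (simp add: abs_mult algebra_simps)
  then have "(1 + k)\<^sup>2 \<le> D\<^sup>2 * (1 + R * \<bar>s\<bar>)\<^sup>2"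
    by (metis k_def abs_ge_zero add_nonneg_nonneg power_mono power_mult_distrib zero_le_one)
  moreover have "0 < 1 + k" "0 < 1 + R * \<bar>s\<bar>"
    using R by (auto simp: k_def add_pos_nonneg)
  ultimately have "1 / (1 + R * \<bar>s\<bar>)\<^sup>2 \<le> D\<^sup>2 / (1 + k)\<^sup>2"
    by (simp add: divide_simps)
  then show ?thesis
    by (simp add: k_def)
qed

text \<open>Two points of an \<open>R\<^sup>-\<^sup>1\<close>-separated set cannot have all coordinates of \<open>D R (\<mu>' - \<mu>)\<close> in
  the same unit interval, since then \<open>|\<mu>' - \<mu>''| \<le> d/(D R) < 1/R\<close>.\<close>
lemma inj_on_floor_scaled_diff:
  fixes \<Lambda> :: "(real^'n::finite) set" and \<mu> :: "real^'n"
  assumes R: "R > 0" and D: "real CARD('n) < D"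
    and sep: "\<forall>\<mu>\<in>\<Lambda>. \<forall>\<mu>'\<in>\<Lambda>. \<mu> \<noteq> \<mu>' \<longrightarrow> dist \<mu> \<mu>' \<ge> 1 / R"
  shows "inj_on (\<lambda>\<mu>' j. \<lfloor>D * R * (\<mu>'$j - \<mu>$j)\<rfloor>) \<Lambda>"
proof (rule inj_onI, rule ccontr)
  fix a b assume a: "a \<in> \<Lambda>" and b: "b \<in> \<Lambda>" and ne: "a \<noteq> b"
    and eq: "(\<lambda>j. \<lfloor>D * R * (a$j - \<mu>$j)\<rfloor>) = (\<lambda>j. \<lfloor>D * R * (b$j - \<mu>$j)\<rfloor>)"
  have D0: "D > 0"
    using D by (metis of_nat_0_le_iff order_le_less_trans)
  have close: "\<bar>a$j - b$j\<bar> < 1 / (D * R)" for j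
  proof -
    have "\<bar>D * R * (a$j - \<mu>$j) - D * R * (b$j - \<mu>$j)\<bar> < 1"
      using fun_cong[OF eq, of j] by linarith
    also have "D * R * (a$j - \<mu>$j) - D * R * (b$j - \<mu>$j) = (D * R) * (a$j - b$j)"
      by (simp add: algebra_simps)
    finally have "D * R * \<bar>a$j - b$j\<bar> < 1"
      using R D0 by (simp add: abs_mult)
    then show ?thesis
      using R D0 by (simp add: field_simps)
  qed
  have "dist a b \<le> (\<Sum>j\<in>UNIV. \<bar>(a - b)$j\<bar>)"
    unfolding dist_norm by (rule norm_le_l1_cart)
  also have "\<dots> < (\<Sum>j\<in>(UNIV::'n set). 1 / (D * R))"
    using close by (intro sum_strict_mono) auto
  also have "\<dots> = (real CARD('n) / D) * (1 / R)"
    by simp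
  also have "\<dots> < 1 / R"
    using D D0 R by (simp add: field_simps)
  finally show False
    using sep a b ne by fastforce
qed

text \<open>By the injectivity above the sum is dominated by a product of one-dimensional lattice sums.\<close>
lemma sum_prod_inverse_square_separated_le:
  fixes \<Lambda> :: "(real^'n::finite) set" and \<mu> :: "real^'n"
  assumes fin: "finite \<Lambda>" and R: "R > 0"
    and sep: "\<forall>\<mu>\<in>\<Lambda>. \<forall>\<mu>'\<in>\<Lambda>. \<mu> \<noteq> \<mu>' \<longrightarrow> dist \<mu> \<mu>' \<ge> 1 / R"
  shows "(\<Sum>\<mu>'\<in>\<Lambda>. \<Prod>j\<in>UNIV. 1 / (1 + R * \<bar>\<mu>$j - \<mu>'$j\<bar>)\<^sup>2) \<le> (3 * (real CARD('n) + 1)\<^sup>2) ^ CARD('n)"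
proof -
  define D where "D = real CARD('n) + 1"
  have D2: "D \<ge> 2"
    by (simp add: D_def)
  define k where "k \<mu>' j = \<lfloor>D * R * (\<mu>'$j - \<mu>$j)\<rfloor>" for \<mu>' :: "real^'n" and j
  have inj: "inj_on k \<Lambda>"
    unfolding k_def using R sep by (intro inj_on_floor_scaled_diff) (simp_all add: D_def)
  define f where "f z = D\<^sup>2 / (1 + \<bar>real_of_int z\<bar>)\<^sup>2" for z :: int
  have f0: "0 \<le> f z" for z
    by (simp add: f_def)
  define Z where "Z j = (\<lambda>\<kappa>. \<kappa> j) ` k ` \<Lambda>" for j
  have "(\<Sum>\<mu>'\<in>\<Lambda>. \<Prod>j\<in>UNIV. 1 / (1 + R * \<bar>\<mu>$j - \<mu>'$j\<bar>)\<^sup>2) \<le> (\<Sum>\<mu>'\<in>\<Lambda>. \<Prod>j\<in>UNIV. f (k \<mu>' j))"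
  proof (intro sum_mono prod_mono conjI)
    fix \<mu>' j
    show "1 / (1 + R * \<bar>\<mu>$j - \<mu>'$j\<bar>)\<^sup>2 \<le> f (k \<mu>' j)"
      using inverse_square_le_floor[OF R D2, of "\<mu>'$j - \<mu>$j"]
      by (simp add: f_def k_def abs_minus_commute)
  qed simp
  also have "\<dots> = (\<Sum>\<kappa>\<in>k ` \<Lambda>. \<Prod>j\<in>UNIV. f (\<kappa> j))"
    using sum.reindex[OF inj, of "\<lambda>\<kappa>. \<Prod>j\<in>UNIV. f (\<kappa> j)"] by simp
  also have "\<dots> \<le> (\<Sum>\<kappa>\<in>PiE UNIV Z. \<Prod>j\<in>UNIV. f (\<kappa> j))"
    using fin f0 by (intro sum_mono2 finite_PiE) (auto simp: Z_def intro: prod_nonneg)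
  also have "\<dots> = (\<Prod>j\<in>UNIV. \<Sum>z\<in>Z j. f z)"
    using prod_sum_PiE[of UNIV Z "\<lambda>j z. f z"] fin by (simp add: Z_def)
  also have "\<dots> \<le> (\<Prod>j\<in>(UNIV::'n set). D\<^sup>2 * 3)"
  proof (intro prod_mono conjI)
    fix j
    show "0 \<le> (\<Sum>z\<in>Z j. f z)"
      using f0 by (intro sum_nonneg) auto
    have "(\<Sum>z\<in>Z j. f z) = D\<^sup>2 * (\<Sum>z\<in>Z j. 1 / (1 + \<bar>real_of_int z\<bar>)\<^sup>2)"
      by (simp add: f_def sum_distrib_left)
    also have "\<dots> \<le> D\<^sup>2 * 3"
      using fin by (intro mult_left_mono sum_inverse_square_int_le) (auto simp: Z_def)
    finally show "(\<Sum>z\<in>Z j. f z) \<le> D\<^sup>2 * 3" .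
  qed
  also have "\<dots> = (3 * (real CARD('n) + 1)\<^sup>2) ^ CARD('n)"
    by (simp add: D_def mult.commute)
  finally show ?thesis .
qed

lemma schur_test:
  fixes P :: "'a \<Rightarrow> 'a \<Rightarrow> real" and c :: "'a \<Rightarrow> real"
  assumes P: "\<And>x y. 0 \<le> P x y" "\<And>x y. P x y = P y x"
    and rows: "\<And>x. x \<in> A \<Longrightarrow> (\<Sum>y\<in>A. P x y) \<le> C"
  shows "(\<Sum>x\<in>A. \<Sum>y\<in>A. c x * c y * P x y) \<le> C * (\<Sum>x\<in>A. (c x)\<^sup>2)"
proof -
  have "c x * c y * P x y \<le> ((c x)\<^sup>2 * P x y + (c y)\<^sup>2 * P x y) / 2" for x y
  proof -
    have "2 * (c x * c y) \<le> (c x)\<^sup>2 + (c y)\<^sup>2"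
      using zero_le_power2[of "c x - c y"] by (simp add: power2_diff)
    from mult_right_mono[OF this P(1)[of x y]] show ?thesis
      by (simp add: algebra_simps)
  qed
  then have "(\<Sum>x\<in>A. \<Sum>y\<in>A. c x * c y * P x y)
      \<le> (\<Sum>x\<in>A. \<Sum>y\<in>A. ((c x)\<^sup>2 * P x y + (c y)\<^sup>2 * P x y) / 2)"
    by (intro sum_mono)
  also have "\<dots> = ((\<Sum>x\<in>A. \<Sum>y\<in>A. (c x)\<^sup>2 * P x y) + (\<Sum>x\<in>A. \<Sum>y\<in>A. (c y)\<^sup>2 * P x y)) / 2"
    by (simp add: sum.distrib flip: sum_divide_distrib)
  also have "(\<Sum>x\<in>A. \<Sum>y\<in>A. (c y)\<^sup>2 * P x y) = (\<Sum>x\<in>A. \<Sum>y\<in>A. (c x)\<^sup>2 * P x y)"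
    by (subst sum.swap) (simp add: P(2))
  also have "((\<Sum>x\<in>A. \<Sum>y\<in>A. (c x)\<^sup>2 * P x y) + (\<Sum>x\<in>A. \<Sum>y\<in>A. (c x)\<^sup>2 * P x y)) / 2
      = (\<Sum>x\<in>A. (c x)\<^sup>2 * (\<Sum>y\<in>A. P x y))"
    unfolding add_divide_distrib field_sum_of_halves by (simp add: sum_distrib_left)
  also have "\<dots> \<le> (\<Sum>x\<in>A. (c x)\<^sup>2 * C)"
    using rows by (intro sum_mono mult_left_mono) auto
  finally show ?thesis
    by (simp add: sum_distrib_left mult.commute)
qed

section \<open>An L2 bound for exponential sums on balls\<close>

lemma cube_bump_nonneg: "0 \<le> cube_bump R x"
  by (simp add: cube_bump_def prod_nonneg bump_nonneg)

lemma one_le_cube_bump: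
  assumes "R > 0" "x \<in> ball 0 R"
  shows "1 \<le> cube_bump R x"
  unfolding cube_bump_def
proof (rule prod_ge_1)
  fix j
  have "\<bar>x$j\<bar> \<le> norm x"
    by (rule component_le_norm_cart)
  with assms have "\<bar>x$j / R\<bar> \<le> 1"
    by (simp add: abs_divide)
  then show "1 \<le> bump (x$j / R)"
    by (rule one_le_bump)
qed

lemma norm_exp_sum_squared:
  "complex_of_real ((cmod (\<Sum>\<mu>\<in>\<Lambda>. c \<mu> * e2pi (\<mu> \<bullet> x)))\<^sup>2)
     = (\<Sum>\<mu>\<in>\<Lambda>. \<Sum>\<mu>'\<in>\<Lambda>. c \<mu> * cnj (c \<mu>') * e2pi ((\<mu> - \<mu>') \<bullet> x))"
proof -
  have "complex_of_real ((cmod (\<Sum>\<mu>\<in>\<Lambda>. c \<mu> * e2pi (\<mu> \<bullet> x)))\<^sup>2)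
      = (\<Sum>\<mu>\<in>\<Lambda>. c \<mu> * e2pi (\<mu> \<bullet> x)) * (\<Sum>\<mu>'\<in>\<Lambda>. cnj (c \<mu>') * e2pi (- (\<mu>' \<bullet> x)))"
    unfolding complex_norm_square by (simp add: cnj_e2pi)
  also have "\<dots> = (\<Sum>\<mu>\<in>\<Lambda>. \<Sum>\<mu>'\<in>\<Lambda>. c \<mu> * cnj (c \<mu>') * (e2pi (\<mu> \<bullet> x) * e2pi (- (\<mu>' \<bullet> x))))"
    by (simp add: sum_product algebra_simps)
  finally show ?thesis
    by (simp add: inner_diff_left e2pi_add[symmetric])
qed

lemma integral_cube_bump_exp_sum:
  assumes R: "R > 0"
  shows "complex_of_real (\<integral>x. cube_bump R x * (cmod (\<Sum>\<mu>\<in>\<Lambda>. c \<mu> * e2pi (\<mu> \<bullet> x)))\<^sup>2 \<partial>lborel)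
     = (\<Sum>\<mu>\<in>\<Lambda>. \<Sum>\<mu>'\<in>\<Lambda>. c \<mu> * cnj (c \<mu>') * fourier (cube_bump R) (\<mu> - \<mu>'))"
proof -
  have int: "integrable lborel (\<lambda>x. of_real (cube_bump R x) * e2pi (\<eta> \<bullet> x))" for \<eta>
    using integrable_diff_bump_mult[OF R empty_subsetI, where h="\<lambda>x. e2pi (\<eta> \<bullet> x)"]
    by (simp add: diff_bump_empty continuous_intros)
  have pointwise: "complex_of_real (cube_bump R x * (cmod (\<Sum>\<mu>\<in>\<Lambda>. c \<mu> * e2pi (\<mu> \<bullet> x)))\<^sup>2)
      = (\<Sum>\<mu>\<in>\<Lambda>. \<Sum>\<mu>'\<in>\<Lambda>. c \<mu> * cnj (c \<mu>') * (of_real (cube_bump R x) * e2pi ((\<mu> - \<mu>') \<bullet> x)))" for x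
    by (simp only: of_real_mult norm_exp_sum_squared) (simp add: sum_distrib_left algebra_simps)
  have "complex_of_real (\<integral>x. cube_bump R x * (cmod (\<Sum>\<mu>\<in>\<Lambda>. c \<mu> * e2pi (\<mu> \<bullet> x)))\<^sup>2 \<partial>lborel)
      = (\<integral>x. (\<Sum>\<mu>\<in>\<Lambda>. \<Sum>\<mu>'\<in>\<Lambda>. c \<mu> * cnj (c \<mu>') * (of_real (cube_bump R x) * e2pi ((\<mu> - \<mu>') \<bullet> x))) \<partial>lborel)"
    unfolding integral_complex_of_real[symmetric] pointwise ..
  also have "\<dots> = (\<Sum>\<mu>\<in>\<Lambda>. \<Sum>\<mu>'\<in>\<Lambda>. c \<mu> * cnj (c \<mu>') * fourier (cube_bump R) (\<mu> - \<mu>'))"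
    unfolding fourier_def
    by (intro has_bochner_integral_integral_eq has_bochner_integral_sum has_bochner_integral_mult_right
        has_bochner_integral_integrable int)
  finally show ?thesis .
qed

lemma set_integral_ball_le_cube_bump:
  fixes h :: "real^'n::finite \<Rightarrow> real"
  assumes R: "R > 0" and h: "continuous_on UNIV h" "\<And>x. 0 \<le> h x"
  shows "(LINT x : ball 0 R | lebesgue. h x) \<le> (\<integral>x. cube_bump R x * h x \<partial>lborel)"
proof -
  have "h \<in> borel_measurable borel"
    using h(1) by (rule borel_measurable_continuous_onI)
  then have "(\<lambda>x. indicator (ball 0 R) x * h x) \<in> borel_measurable lborel"
    by (intro borel_measurable_times borel_measurable_indicator) auto
  then have "(LINT x : ball 0 R | lebesgue. h x) = (\<integral>x. indicator (ball 0 R) x * h x \<partial>lborel)"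
    by (simp add: set_lebesgue_integral_def integral_completion)
  also have "\<dots> \<le> (\<integral>x. cube_bump R x * h x \<partial>lborel)"
  proof (rule integral_mono')
    show "integrable lborel (\<lambda>x. cube_bump R x * h x)"
      using integrable_diff_bump_mult[OF R empty_subsetI h(1)] by (simp add: diff_bump_empty)
    show "indicator (ball 0 R) x * h x \<le> cube_bump R x * h x" for x
      using one_le_cube_bump[OF R, of x] cube_bump_nonneg[of R x] h(2)[of x]
      using mult_right_mono[of 1 "cube_bump R x" "h x"]
      by (cases "x \<in> ball 0 R") auto
    show "0 \<le> cube_bump R x * h x" for x
      using cube_bump_nonneg h(2) by (rule mult_nonneg_nonneg)
  qed
  finally show ?thesis .
qed

theorem set_integral_ball_exp_sum_le:
  fixes \<Lambda> :: "(real^'n::finite) set" and c :: "real^'n \<Rightarrow> complex"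
  assumes fin: "finite \<Lambda>" and R: "R > 0"
    and sep: "\<forall>\<mu>\<in>\<Lambda>. \<forall>\<mu>'\<in>\<Lambda>. \<mu> \<noteq> \<mu>' \<longrightarrow> dist \<mu> \<mu>' \<ge> 1 / R"
  shows "(LINT x : ball 0 R | lebesgue. (cmod (\<Sum>\<mu>\<in>\<Lambda>. c \<mu> * e2pi (\<mu> \<bullet> x)))\<^sup>2)
          \<le> (60000 * (real CARD('n) + 1)\<^sup>2) ^ CARD('n) * R ^ CARD('n) * (\<Sum>\<mu>\<in>\<Lambda>. (cmod (c \<mu>))\<^sup>2)"
proof -
  define P where "P \<mu> \<mu>' = (\<Prod>j\<in>UNIV. 1 / (1 + R * \<bar>\<mu>$j - \<mu>'$j\<bar>)\<^sup>2)" for \<mu> \<mu>' :: "real^'n"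
  define K where "K = (20000 * R) ^ CARD('n)"
  let ?S = "\<lambda>x. \<Sum>\<mu>\<in>\<Lambda>. c \<mu> * e2pi (\<mu> \<bullet> x)"
  have "(LINT x : ball 0 R | lebesgue. (cmod (?S x))\<^sup>2) \<le> (\<integral>x. cube_bump R x * (cmod (?S x))\<^sup>2 \<partial>lborel)"
    using R by (intro set_integral_ball_le_cube_bump continuous_intros) auto
  also have "\<dots> \<le> cmod (\<Sum>\<mu>\<in>\<Lambda>. \<Sum>\<mu>'\<in>\<Lambda>. c \<mu> * cnj (c \<mu>') * fourier (cube_bump R) (\<mu> - \<mu>'))"
    unfolding integral_cube_bump_exp_sum[OF R, symmetric] by simp
  also have "\<dots> \<le> (\<Sum>\<mu>\<in>\<Lambda>. \<Sum>\<mu>'\<in>\<Lambda>. cmod (c \<mu>) * cmod (c \<mu>') * (K * P \<mu> \<mu>'))"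
  proof (rule order_trans[OF norm_sum sum_mono], rule order_trans[OF norm_sum sum_mono])
    fix \<mu> \<mu>'
    show "cmod (c \<mu> * cnj (c \<mu>') * fourier (cube_bump R) (\<mu> - \<mu>')) \<le> cmod (c \<mu>) * cmod (c \<mu>') * (K * P \<mu> \<mu>')"
      using norm_fourier_cube_bump_le[OF R, of "\<mu> - \<mu>'"]
      by (simp add: norm_mult K_def P_def mult_left_mono)
  qed
  also have "\<dots> = K * (\<Sum>\<mu>\<in>\<Lambda>. \<Sum>\<mu>'\<in>\<Lambda>. cmod (c \<mu>) * cmod (c \<mu>') * P \<mu> \<mu>')"
    by (simp add: sum_distrib_left algebra_simps)
  also have "\<dots> \<le> K * ((3 * (real CARD('n) + 1)\<^sup>2) ^ CARD('n) * (\<Sum>\<mu>\<in>\<Lambda>. (cmod (c \<mu>))\<^sup>2))"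
    using R sum_prod_inverse_square_separated_le[OF fin R sep]
    by (intro mult_left_mono schur_test) (auto simp: P_def K_def abs_minus_commute prod_nonneg)
  also have "\<dots> = (60000 * (real CARD('n) + 1)\<^sup>2) ^ CARD('n) * R ^ CARD('n) * (\<Sum>\<mu>\<in>\<Lambda>. (cmod (c \<mu>))\<^sup>2)"
    unfolding K_def mult.assoc[symmetric] power_mult_distrib[symmetric] by (simp add: mult_ac)
  finally show ?thesis .
qed

section \<open>Removing the symbol\<close>

lemma Cauchy_Schwarz_ineq_sum_weighted:
  fixes w g :: "'a \<Rightarrow> real"
  assumes "\<And>t. t \<in> A \<Longrightarrow> 0 \<le> w t"
  shows "(\<Sum>t\<in>A. w t * g t)\<^sup>2 \<le> (\<Sum>t\<in>A. w t) * (\<Sum>t\<in>A. w t * (g t)\<^sup>2)"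
proof -
  have "(\<Sum>t\<in>A. w t * g t) = (\<Sum>t\<in>A. sqrt (w t) * (sqrt (w t) * g t))"
    using assms by (intro sum.cong) (auto simp flip: mult.assoc)
  also have "(\<dots>)\<^sup>2 \<le> (\<Sum>t\<in>A. (sqrt (w t))\<^sup>2) * (\<Sum>t\<in>A. (sqrt (w t) * g t)\<^sup>2)"
    by (rule Cauchy_Schwarz_ineq_sum)
  also have "\<dots> = (\<Sum>t\<in>A. w t) * (\<Sum>t\<in>A. w t * (g t)\<^sup>2)"
    using assms by (simp add: power_mult_distrib)
  finally show ?thesis .
qed

lemma integrable_indicator_ball_continuous:
  fixes h :: "'a::euclidean_space \<Rightarrow> real"
  assumes "continuous_on UNIV h"
  shows "integrable lebesgue (\<lambda>x. indicator (ball 0 R) x * h x)"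
proof -
  have "integrable lborel (\<lambda>x. indicator (cball 0 R) x *\<^sub>R h x)"
    using assms by (intro borel_integrable_compact) (auto intro: continuous_on_subset)
  then have "integrable lborel (\<lambda>x. indicator (ball 0 R) x *\<^sub>R (indicator (cball 0 R) x *\<^sub>R h x))"
    by (rule integrable_mult_indicator[rotated]) auto
  moreover have "(\<lambda>x. indicator (ball 0 R) x *\<^sub>R (indicator (cball 0 R) x *\<^sub>R h x))
      = (\<lambda>x. indicator (ball 0 R) x * h x)"
    by (auto simp: fun_eq_iff indicator_def)
  moreover have "h \<in> borel_measurable borel"
    using assms by (rule borel_measurable_continuous_onI)
  ultimately show ?thesis
    by (simp add: integrable_completion)
qed

lemma sum_grid_diffs_below:
  fixes g :: "real^'n::finite \<Rightarrow> 'b::ab_group_add"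
  assumes fin: "\<And>i. finite (T i)" and L: "set L = UNIV" "distinct L" and \<mu>: "\<mu> \<in> grid T"
  shows "g \<mu> = (\<Sum>t\<in>grid T. if \<forall>i. t$i \<le> \<mu>$i then grid_diffs T L g t else 0)"
proof -
  have "g \<mu> = grid_sums T L (grid_diffs T L g) \<mu>"
    using grid_sums_grid_diffs[of T L \<mu> g] fin L(2) \<mu> by (simp add: grid_def)
  also have "\<dots> = (\<Sum>t\<in>grid_box T L \<mu>. grid_diffs T L g t)"
    by (rule grid_sums_eq_sum_grid_box[OF fin L(2)])
  also have "grid_box T L \<mu> = {t \<in> grid T. \<forall>i. t$i \<le> \<mu>$i}"
    using L(1) by (auto simp: grid_box_def grid_def)
  finally show ?thesis
    using finite_grid[of T] fin by (simp add: sum.inter_filter)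
qed

lemma sum_mult_eq_sum_grid_diffs:
  fixes a :: "real^'n::finite \<Rightarrow> complex"
  assumes fin: "finite \<Lambda>" and L: "set L = UNIV" "distinct L"
  defines "T \<equiv> \<lambda>j. (\<lambda>\<mu>. \<mu>$j) ` \<Lambda>"
  shows "(\<Sum>\<mu>\<in>\<Lambda>. b \<mu> * a \<mu> * e \<mu>)
     = (\<Sum>t\<in>grid T. grid_diffs T L a t * (\<Sum>\<mu>\<in>\<Lambda>. (if \<forall>i. t$i \<le> \<mu>$i then b \<mu> else 0) * e \<mu>))"
proof -
  have "a \<mu> = (\<Sum>t\<in>grid T. if \<forall>i. t$i \<le> \<mu>$i then grid_diffs T L a t else 0)" if "\<mu> \<in> \<Lambda>" for \<mu>
    using fin that by (intro sum_grid_diffs_below L) (auto simp: T_def grid_def)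
  then have "(\<Sum>\<mu>\<in>\<Lambda>. b \<mu> * a \<mu> * e \<mu>)
      = (\<Sum>\<mu>\<in>\<Lambda>. \<Sum>t\<in>grid T. b \<mu> * (if \<forall>i. t$i \<le> \<mu>$i then grid_diffs T L a t else 0) * e \<mu>)"
    by (simp add: sum_distrib_left sum_distrib_right)
  also have "\<dots> = (\<Sum>t\<in>grid T. \<Sum>\<mu>\<in>\<Lambda>. grid_diffs T L a t * ((if \<forall>i. t$i \<le> \<mu>$i then b \<mu> else 0) * e \<mu>))"
    by (subst sum.swap) (auto intro!: sum.cong simp: mult_ac)
  finally show ?thesis
    by (simp add: sum_distrib_left)
qed

lemma norm_sum_mult_squared_le:
  fixes D G :: "'a \<Rightarrow> complex" and W :: "'a \<Rightarrow> real"
  assumes W: "\<And>t. t \<in> A \<Longrightarrow> 0 \<le> W t" and D: "\<And>t. t \<in> A \<Longrightarrow> cmod (D t) \<le> W t * B"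
    and sum_W: "(\<Sum>t\<in>A. W t) \<le> S" and B: "0 \<le> B"
  shows "(cmod (\<Sum>t\<in>A. D t * G t))\<^sup>2 \<le> B\<^sup>2 * S * (\<Sum>t\<in>A. W t * (cmod (G t))\<^sup>2)"
proof -
  have "cmod (\<Sum>t\<in>A. D t * G t) \<le> (\<Sum>t\<in>A. W t * B * cmod (G t))"
    by (rule order_trans[OF norm_sum sum_mono]) (simp add: norm_mult D mult_right_mono)
  also have "\<dots> = B * (\<Sum>t\<in>A. W t * cmod (G t))"
    by (simp add: sum_distrib_left mult_ac)
  finally have "(cmod (\<Sum>t\<in>A. D t * G t))\<^sup>2 \<le> (B * (\<Sum>t\<in>A. W t * cmod (G t)))\<^sup>2"
    by (rule power_mono) simp
  also have "\<dots> = B\<^sup>2 * (\<Sum>t\<in>A. W t * cmod (G t))\<^sup>2"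
    by (simp add: power_mult_distrib)
  also have "\<dots> \<le> B\<^sup>2 * ((\<Sum>t\<in>A. W t) * (\<Sum>t\<in>A. W t * (cmod (G t))\<^sup>2))"
    using W by (intro mult_left_mono Cauchy_Schwarz_ineq_sum_weighted) auto
  also have "\<dots> \<le> B\<^sup>2 * (S * (\<Sum>t\<in>A. W t * (cmod (G t))\<^sup>2))"
    using W sum_W by (intro mult_left_mono mult_right_mono sum_nonneg) auto
  finally show ?thesis
    by (simp add: mult.assoc)
qed

lemma sum_prod_grid_gap_projections_le:
  fixes \<Lambda> :: "(real^'n::finite) set"
  assumes fin: "finite \<Lambda>" and unit: "\<And>\<mu>. \<mu> \<in> \<Lambda> \<Longrightarrow> norm \<mu> \<le> 1"
  defines "T \<equiv> \<lambda>j. (\<lambda>\<mu>. \<mu>$j) ` \<Lambda>"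
  shows "(\<Sum>t\<in>grid T. \<Prod>i\<in>UNIV. grid_gap T i (t$i)) \<le> 3 ^ CARD('n)"
proof (rule sum_prod_grid_gap_le)
  show "finite (T i)" for i
    using fin by (simp add: T_def)
  show "\<bar>u\<bar> \<le> 1" if u: "u \<in> T i" for i u
  proof -
    obtain \<mu> where "\<mu> \<in> \<Lambda>" "u = \<mu>$i"
      using u by (auto simp: T_def)
    then show ?thesis
      using component_le_norm_cart[of \<mu> i] unit[of \<mu>] by simp
  qed
qed

lemma norm_symbol_sum_squared_le:
  fixes g :: "real^'n::finite \<Rightarrow> complex"
  assumes fin: "finite \<Lambda>" and unit: "\<And>\<mu>. \<mu> \<in> \<Lambda> \<Longrightarrow> norm \<mu> \<le> 1"
    and smooth: "\<And>is \<xi>. pderivs is g differentiable (at \<xi>)"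
    and bound: "\<And>is \<xi>. length is \<le> CARD('n) \<Longrightarrow> cmod (pderivs is g \<xi>) \<le> B"
  defines "T \<equiv> \<lambda>j. (\<lambda>\<mu>. \<mu>$j) ` \<Lambda>"
  shows "(cmod (\<Sum>\<mu>\<in>\<Lambda>. b \<mu> * g \<mu> * e \<mu>))\<^sup>2 \<le> B\<^sup>2 * 3 ^ CARD('n) *
           (\<Sum>t\<in>grid T. (\<Prod>i\<in>UNIV. grid_gap T i (t$i)) *
              (cmod (\<Sum>\<mu>\<in>\<Lambda>. (if \<forall>i. t$i \<le> \<mu>$i then b \<mu> else 0) * e \<mu>))\<^sup>2)"
proof -
  have finT: "finite (T i)" for i
    using fin by (simp add: T_def)
  obtain L where L: "set L = (UNIV :: 'n set)" "distinct L"
    using finite_distinct_list[of "UNIV :: 'n set"] by auto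
  have "length L = CARD('n)"
    using distinct_card[OF L(2)] L(1) by simp
  then have "cmod (grid_diffs T L g t) \<le> (\<Prod>i\<in>UNIV. grid_gap T i (t$i)) * B" for t
    using norm_grid_diffs_le[where L=L and n="CARD('n)" and g=g and B=B and T=T] L smooth bound finT
    by simp
  moreover have "(\<Sum>t\<in>grid T. \<Prod>i\<in>UNIV. grid_gap T i (t$i)) \<le> 3 ^ CARD('n)"
    unfolding T_def using fin unit by (rule sum_prod_grid_gap_projections_le)
  moreover have "0 \<le> B"
    using order_trans[OF norm_ge_zero bound[of "[]" 0]] by simp
  ultimately show ?thesis
    unfolding sum_mult_eq_sum_grid_diffs[OF fin L, folded T_def]
    by (intro norm_sum_mult_squared_le) (simp_all add: prod_nonneg grid_gap_nonneg finT)
qed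

lemma set_integral_ball_le_weighted_sum:
  fixes f :: "real^'n::finite \<Rightarrow> real" and G :: "'a \<Rightarrow> real^'n \<Rightarrow> complex"
  assumes W: "\<And>t. t \<in> A \<Longrightarrow> 0 \<le> W t" and G: "\<And>t. t \<in> A \<Longrightarrow> continuous_on UNIV (G t)"
    and pointwise: "\<And>x. x \<in> ball 0 R \<Longrightarrow> f x \<le> (\<Sum>t\<in>A. W t * (cmod (G t x))\<^sup>2)"
    and each: "\<And>t. t \<in> A \<Longrightarrow> (LINT x : ball 0 R | lebesgue. (cmod (G t x))\<^sup>2) \<le> C"
  shows "(LINT x : ball 0 R | lebesgue. f x) \<le> (\<Sum>t\<in>A. W t) * C"
proof -
  have int: "integrable lebesgue (\<lambda>x. indicator (ball 0 R) x * (cmod (G t x))\<^sup>2)" if "t \<in> A" for t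
    using G[OF that] by (intro integrable_indicator_ball_continuous continuous_intros)
  txt \<open>No integrability of \<open>f\<close> is needed: \<open>integral_mono'\<close> only asks for it of the
    upper bound, a non-integrable \<open>f\<close> having integral \<open>0\<close>.\<close>
  have "(LINT x : ball 0 R | lebesgue. f x) = (\<integral>x. indicator (ball 0 R) x * f x \<partial>lebesgue)"
    by (simp add: set_lebesgue_integral_def)
  also have "\<dots> \<le> (\<integral>x. (\<Sum>t\<in>A. W t * (indicator (ball 0 R) x * (cmod (G t x))\<^sup>2)) \<partial>lebesgue)"
  proof (rule integral_mono')
    show "integrable lebesgue (\<lambda>x. \<Sum>t\<in>A. W t * (indicator (ball 0 R) x * (cmod (G t x))\<^sup>2))"
      using int by (intro Bochner_Integration.integrable_sum integrable_mult_right)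
    show "indicator (ball 0 R) x * f x \<le> (\<Sum>t\<in>A. W t * (indicator (ball 0 R) x * (cmod (G t x))\<^sup>2))" for x
      using pointwise[of x] by (cases "x \<in> ball 0 R") simp_all
    show "0 \<le> (\<Sum>t\<in>A. W t * (indicator (ball 0 R) x * (cmod (G t x))\<^sup>2))" for x
      using W by (intro sum_nonneg) simp
  qed
  also have "\<dots> = (\<Sum>t\<in>A. W t * (\<integral>x. indicator (ball 0 R) x * (cmod (G t x))\<^sup>2 \<partial>lebesgue))"
    by (intro has_bochner_integral_integral_eq has_bochner_integral_sum has_bochner_integral_mult_right
        has_bochner_integral_integrable) (auto intro: int)
  also have "\<dots> = (\<Sum>t\<in>A. W t * (LINT x : ball 0 R | lebesgue. (cmod (G t x))\<^sup>2))"
    by (simp add: set_lebesgue_integral_def)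
  also have "\<dots> \<le> (\<Sum>t\<in>A. W t * C)"
    using each W by (intro sum_mono mult_left_mono) auto
  finally show ?thesis
    by (simp add: sum_distrib_right)
qed

lemma set_integral_ball_symbol_exp_sum_le:
  fixes a :: "real^'n::finite \<Rightarrow> real^'n \<Rightarrow> complex" and b :: "real^'n \<Rightarrow> complex"
  assumes smooth: "\<And>x. smooth_fun (a x)"
    and bound: "\<And>x \<xi> is. length is \<le> CARD('n) \<Longrightarrow> cmod (pderivs is (a x) \<xi>) \<le> M * jbr x powr (\<nu> / 2)"
    and R: "R \<ge> 1" and fin: "finite \<Lambda>" and sphere: "\<Lambda> \<subseteq> sphere 0 1"
    and sep: "\<forall>\<mu>\<in>\<Lambda>. \<forall>\<mu>'\<in>\<Lambda>. \<mu> \<noteq> \<mu>' \<longrightarrow> dist \<mu> \<mu>' \<ge> 1 / R"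
    and M: "M \<ge> 0" and \<nu>: "\<nu> \<ge> 0"
  shows "(LINT x : ball 0 R | lebesgue. (cmod (\<Sum>\<mu>\<in>\<Lambda>. b \<mu> * a x \<mu> * e2pi (\<mu> \<bullet> x)))\<^sup>2)
     \<le> (M * (3 * R) powr (\<nu> / 2))\<^sup>2 * 9 ^ CARD('n) * (60000 * (real CARD('n) + 1)\<^sup>2) ^ CARD('n)
         * R ^ CARD('n) * (\<Sum>\<mu>\<in>\<Lambda>. (cmod (b \<mu>))\<^sup>2)"
proof -
  define T where "T = (\<lambda>j. (\<lambda>\<mu>. \<mu>$j) ` \<Lambda>)"
  define B where "B = M * (3 * R) powr (\<nu> / 2)"
  define W where "W t = B\<^sup>2 * 3 ^ CARD('n) * (\<Prod>i\<in>UNIV. grid_gap T i (t$i))" for t :: "real^'n"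
  define G where "G t x = (\<Sum>\<mu>\<in>\<Lambda>. (if \<forall>i. t$i \<le> \<mu>$i then b \<mu> else 0) * e2pi (\<mu> \<bullet> x))"
    for t x :: "real^'n"
  define C where "C = (60000 * (real CARD('n) + 1)\<^sup>2) ^ CARD('n) * R ^ CARD('n) * (\<Sum>\<mu>\<in>\<Lambda>. (cmod (b \<mu>))\<^sup>2)"
  have unit: "norm \<mu> \<le> 1" if "\<mu> \<in> \<Lambda>" for \<mu>
    using sphere that by auto
  have "(LINT x : ball 0 R | lebesgue. (cmod (\<Sum>\<mu>\<in>\<Lambda>. b \<mu> * a x \<mu> * e2pi (\<mu> \<bullet> x)))\<^sup>2)
      \<le> (\<Sum>t\<in>grid T. W t) * C"
  proof (rule set_integral_ball_le_weighted_sum)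
    show "0 \<le> W t" for t
      using fin unfolding W_def T_def by (intro mult_nonneg_nonneg prod_nonneg grid_gap_nonneg) auto
    show "continuous_on UNIV (G t)" for t
      unfolding G_def by (intro continuous_intros)
    show "(cmod (\<Sum>\<mu>\<in>\<Lambda>. b \<mu> * a x \<mu> * e2pi (\<mu> \<bullet> x)))\<^sup>2 \<le> (\<Sum>t\<in>grid T. W t * (cmod (G t x))\<^sup>2)"
      if x: "x \<in> ball 0 R" for x
    proof -
      have "jbr x powr (\<nu> / 2) \<le> (3 * R) powr (\<nu> / 2)"
        using x R \<nu> by (intro powr_mono2) (auto simp: jbr_def)
      then have "cmod (pderivs is (a x) \<xi>) \<le> B" if "length is \<le> CARD('n)" for "is" \<xi>
        using bound[OF that, of x \<xi>] M unfolding B_def by (meson mult_left_mono order_trans)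
      with fin unit smooth
      have "(cmod (\<Sum>\<mu>\<in>\<Lambda>. b \<mu> * a x \<mu> * e2pi (\<mu> \<bullet> x)))\<^sup>2
          \<le> B\<^sup>2 * 3 ^ CARD('n) * (\<Sum>t\<in>grid T. (\<Prod>i\<in>UNIV. grid_gap T i (t$i)) * (cmod (G t x))\<^sup>2)"
        unfolding G_def T_def smooth_fun_def by (intro norm_symbol_sum_squared_le) auto
      then show ?thesis
        by (simp add: W_def sum_distrib_left mult_ac)
    qed
    show "(LINT x : ball 0 R | lebesgue. (cmod (G t x))\<^sup>2) \<le> C" for t
    proof -
      have "(LINT x : ball 0 R | lebesgue. (cmod (G t x))\<^sup>2)
          \<le> (60000 * (real CARD('n) + 1)\<^sup>2) ^ CARD('n) * R ^ CARD('n) *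
             (\<Sum>\<mu>\<in>\<Lambda>. (cmod (if \<forall>i. t$i \<le> \<mu>$i then b \<mu> else 0))\<^sup>2)"
        unfolding G_def using R by (intro set_integral_ball_exp_sum_le fin sep) simp
      also have "\<dots> \<le> C"
        unfolding C_def using R by (intro mult_left_mono sum_mono) auto
      finally show ?thesis .
    qed
  qed
  also have "\<dots> \<le> B\<^sup>2 * 3 ^ CARD('n) * 3 ^ CARD('n) * C"
  proof -
    have "(\<Sum>t\<in>grid T. \<Prod>i\<in>UNIV. grid_gap T i (t$i)) \<le> 3 ^ CARD('n)"
      unfolding T_def using fin unit by (rule sum_prod_grid_gap_projections_le)
    moreover have "0 \<le> C"
      unfolding C_def using R by (intro mult_nonneg_nonneg sum_nonneg) auto
    ultimately show ?thesis
      unfolding W_def sum_distrib_left[symmetric] by (intro mult_right_mono mult_left_mono) auto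
  qed
  also have "\<dots> = B\<^sup>2 * 9 ^ CARD('n) * C"
    by (simp add: power_mult_distrib[symmetric])
  finally show ?thesis
    by (simp add: B_def C_def mult_ac)
qed

lemma sqrt_set_integral_ball_symbol_exp_sum_le:
  fixes a :: "real^'n::finite \<Rightarrow> real^'n \<Rightarrow> complex" and b :: "real^'n \<Rightarrow> complex"
  assumes \<nu>: "\<nu> \<ge> 0" and smooth: "\<forall>x. smooth_fun (a x)"
    and bound: "\<forall>x \<xi> (is :: 'n list). length is \<le> CARD('n) \<longrightarrow>
                  cmod (pderivs is (a x) \<xi>) \<le> M * jbr x powr (\<nu> / 2)"
    and R: "R \<ge> 1" and fin: "finite \<Lambda>" and sphere: "\<Lambda> \<subseteq> sphere 0 1"
    and sep: "\<forall>\<mu>\<in>\<Lambda>. \<forall>\<mu>'\<in>\<Lambda>. \<mu> \<noteq> \<mu>' \<longrightarrow> dist \<mu> \<mu>' \<ge> 1 / R"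
  shows "sqrt (LINT x : ball 0 R | lebesgue. (cmod (\<Sum>\<mu>\<in>\<Lambda>. b \<mu> * a x \<mu> * e2pi (\<mu> \<bullet> x)))\<^sup>2)
     \<le> (\<bar>M\<bar> * 3 powr (\<nu> / 2) * 3 ^ CARD('n) * sqrt ((60000 * (real CARD('n) + 1)\<^sup>2) ^ CARD('n)))
         * R powr ((real CARD('n) + \<nu>) / 2) * sqrt (\<Sum>\<mu>\<in>\<Lambda>. (cmod (b \<mu>))\<^sup>2)"
proof -
  define C :: real where "C = (60000 * (real CARD('n) + 1)\<^sup>2) ^ CARD('n)"
  define S where "S = (\<Sum>\<mu>\<in>\<Lambda>. (cmod (b \<mu>))\<^sup>2)"
  have "cmod (pderivs is (a x) \<xi>) \<le> \<bar>M\<bar> * jbr x powr (\<nu> / 2)" if "length is \<le> CARD('n)" for x \<xi> "is"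
    using bound that by (meson abs_ge_self mult_right_mono order_trans powr_ge_zero)
  with smooth have "(LINT x : ball 0 R | lebesgue. (cmod (\<Sum>\<mu>\<in>\<Lambda>. b \<mu> * a x \<mu> * e2pi (\<mu> \<bullet> x)))\<^sup>2)
      \<le> (\<bar>M\<bar> * (3 * R) powr (\<nu> / 2))\<^sup>2 * 9 ^ CARD('n) * C * R ^ CARD('n) * S"
    using set_integral_ball_symbol_exp_sum_le[OF _ _ R fin sphere sep _ \<nu>] by (simp add: C_def S_def)
  also have "\<dots> = ((\<bar>M\<bar> * 3 powr (\<nu> / 2) * 3 ^ CARD('n) * sqrt C) * R powr ((real CARD('n) + \<nu>) / 2))\<^sup>2 * S"
  proof -
    have sq: "(x powr (t / 2))\<^sup>2 = x powr t" for x t :: real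
      by (simp add: power2_eq_square flip: powr_add)
    have "((3 * R) powr (\<nu> / 2))\<^sup>2 = 3 powr \<nu> * R powr \<nu>"
      using R by (simp add: sq powr_mult power_mult_distrib)
    moreover have "(R powr ((real CARD('n) + \<nu>) / 2))\<^sup>2 = R ^ CARD('n) * R powr \<nu>"
      using R by (simp add: sq powr_add powr_realpow)
    moreover have "((3::real) ^ CARD('n))\<^sup>2 = 9 ^ CARD('n)"
      by (simp add: power2_eq_square flip: power_mult_distrib)
    ultimately show ?thesis
      by (simp add: C_def power_mult_distrib sq mult_ac)
  qed
  finally show ?thesis
    using real_sqrt_le_mono by (fastforce simp: real_sqrt_mult S_def C_def)
qed

theorem mainTheorem6:
  fixes \<nu> :: real
  assumes dim: "CARD('n::finite) \<ge> 2"
    and nu: "\<nu> > 0"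
  shows "\<exists>N::nat. \<forall>M::real. \<exists>K::real. \<forall>(a :: real^'n \<Rightarrow> real^'n \<Rightarrow> complex) R
            (\<Lambda> :: (real^'n) set) (b :: real^'n \<Rightarrow> complex).
     (\<forall>x. smooth_fun (\<lambda>\<xi>. a x \<xi>))
   \<longrightarrow> (\<forall>k::nat. \<exists>C::real. \<forall>x \<xi> (is :: 'n list). length is \<le> k \<longrightarrow>
            cmod (pderivs is (\<lambda>\<eta>. a x \<eta>) \<xi>) \<le> C * jbr x powr (\<nu> / 2))
   \<longrightarrow> (\<forall>x \<xi> (is :: 'n list). length is \<le> N \<longrightarrow>
            cmod (pderivs is (\<lambda>\<eta>. a x \<eta>) \<xi>) \<le> M * jbr x powr (\<nu> / 2))
   \<longrightarrow> (\<forall>\<xi>. (\<lambda>x. a x \<xi>) \<in> borel_measurable lebesgue)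
   \<longrightarrow> R \<ge> 1
   \<longrightarrow> finite \<Lambda>
   \<longrightarrow> \<Lambda> \<subseteq> sphere 0 1
   \<longrightarrow> (\<forall>\<mu>\<in>\<Lambda>. \<forall>\<mu>'\<in>\<Lambda>. \<mu> \<noteq> \<mu>' \<longrightarrow> dist \<mu> \<mu>' \<ge> 1 / R)
   \<longrightarrow> sqrt (LINT x : ball 0 R | lebesgue.
          (cmod (\<Sum>\<mu>\<in>\<Lambda>. b \<mu> * a x \<mu> * exp (2 * of_real pi * \<i> * of_real (\<mu> \<bullet> x))))\<^sup>2)
       \<le> K * R powr ((real CARD('n) + \<nu>) / 2) * sqrt (\<Sum>\<mu>\<in>\<Lambda>. (cmod (b \<mu>))\<^sup>2)"
  by (intro exI[of _ "CARD('n)"] allI exI impI)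
    (rule sqrt_set_integral_ball_symbol_exp_sum_le[unfolded e2pi_def], use nu in auto)

end
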